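(* The edge generating series of the Motzkin lattices is $$\sum_{n\ge0}\ell(\mathcal{M}_n)x^n=\frac{(1+x)\big(1-2x-x^2-(1-x)\sqrt{1-2x-3x^2}\big)}{2x^2\sqrt{1-2x-3x^2}}.$$ Moreover: (i) for $n\ge1$, $\ell(\mathcal{M}_n)=T_n-M_n+T_{n-1}-M_{n-1}$; (ii) for $n\ge3$, $\ell(\mathcal{M}_n)=[x^{n-2}](1+x+x^2)^n+[x^{n-3}](1+x+x^2)^{n-1}$; (iii) for $n\ge1$, $\ell(\mathcal{M}_n)=\frac2n\sum_{k=0}^{\lfloor n/2\rfloor}\binom nk\binom{n-k}{k}\frac{k(n-k)}{k+1}$. Finally, $\ell(\mathcal{M}_n)\sim \frac{2\cdot3^n}{\sqrt{3n\pi}}$ and $i(\mathcal{M}_n)=\ell(\mathcal{M}_n)/|\mathcal{M}_n|\sim\frac49 n$.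
   Context: Steps: $U=(1,1)$, $D=(1,-1)$, $H=(1,0)$. $\mathcal{M}_n$ is the set of Motzkin paths of length $n$ (lattice paths from $(0,0)$ to $(n,0)$ with steps $U,D,H$ never going below the $x$-axis), partially ordered by $\gamma_1\le\gamma_2$ iff $\gamma_1$ lies weakly below $\gamma_2$. $\ell(P)$ is the number of edges (covering pairs) of the Hasse diagram of a finite poset $P$, and $i(P)=\ell(P)/|P|$. $T_n=[x^n](1+x+x^2)^n$ is the central trinomial coefficient (generating series $1/\sqrt{1-2x-3x^2}$), and $M_n=|\mathcal{M}_n|$ is the $n$-th Motzkin number (generating series $(1-x-\sqrt{1-2x-3x^2})/(2x^2)$). $a_n\sim b_n$ means $a_n/b_n\to1$. *)

theory Defs
  imports "HOL-Analysis.Analysis" "HOL-Computational_Algebra.Polynomial" "HOL-Library.Landau_Symbols"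
begin

text \<open>Steps U=(1,1), D=(1,-1), H=(1,0); a path is the list of its steps.\<close>
datatype step = U | D | H

fun step_val :: "step \<Rightarrow> int" where
  "step_val U = 1" | "step_val D = -1" | "step_val H = 0"

definition height :: "step list \<Rightarrow> int" where
  "height p = sum_list (map step_val p)"

definition motzkin_paths :: "nat \<Rightarrow> step list set" where
  "motzkin_paths n = {p. length p = n \<and> (\<forall>i\<le>n. height (take i p) \<ge> 0) \<and> height p = 0}"

definition path_le :: "step list \<Rightarrow> step list \<Rightarrow> bool" where
  "path_le p q \<longleftrightarrow> length p = length q \<and>
     (\<forall>i\<le>length p. height (take i p) \<le> height (take i q))"

definition covers :: "'a set \<Rightarrow> ('a \<Rightarrow> 'a \<Rightarrow> bool) \<Rightarrow> ('a \<times> 'a) set" where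
  "covers P le = {(a, b). a \<in> P \<and> b \<in> P \<and> a \<noteq> b \<and> le a b \<and>
      \<not> (\<exists>c\<in>P. c \<noteq> a \<and> c \<noteq> b \<and> le a c \<and> le c b)}"

definition hasse_edges :: "'a set \<Rightarrow> ('a \<Rightarrow> 'a \<Rightarrow> bool) \<Rightarrow> nat" where
  "hasse_edges P le = card (covers P le)"

definition ellM :: "nat \<Rightarrow> nat" where
  "ellM n = hasse_edges (motzkin_paths n) path_le"

definition motzkin :: "nat \<Rightarrow> nat" where
  "motzkin n = card (motzkin_paths n)"

definition trinom :: "nat \<Rightarrow> nat \<Rightarrow> nat" where
  "trinom m k = coeff ([:1, 1, 1:] ^ m) k"

definition central_trinomial :: "nat \<Rightarrow> nat" where
  "central_trinomial n = trinom n n"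

end

theory Submission
  imports Defs "HOL-Real_Asymp.Real_Asymp" "HOL-Probability.Hoeffding" "HOL-Analysis.FPS_Convergence"
begin

text \<open>
  Writing $a_n(h) = [x^{n+h}](1+x+x^2)^n$, a path is covered by another
  exactly when the latter is obtained by raising the former by one unit at a single interior
  point where the path does not have an up step before or a down step after
  (raise_at); so $\ell(\mathcal{M}_n)$ is the total number of such raisable points.
  For a nonempty Motzkin path this number equals (horizontal steps) + (peaks) - 1, and
  summing these statistics over meanders with the last-step decomposition, the reflection
  principle and a ballot identity gives the key formula
  $\ell(\mathcal{M}_{m+1}) = a_{m+1}(2) + a_m(2)$.  Parts (i)-(iii) are rewritings of it.

  The central trinomials $T_n = a_n(0)$ satisfy a three-term recurrence,
  i.e. $(1-2x-3x^2)T' = (1+3x)T$, whence $\sum T_n x^n = (1-2x-3x^2)^{-1/2}$; since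
  $a_n(2)$ is a combination of $T_n, T_{n+1}, T_{n+2}$ this yields the generating function.
  For the asymptotics we write $T_n/3^n = \sum_j w_n(j)\,\binom{2j}{j}4^{-j}$ with binomial
  weights $w_n(j)$, bound $\binom{2j}{j}4^{-j}$ by Wallis' product and control the weights
  by Hoeffding's inequality, obtaining $T_n \sim 3^{n+1/2}/(2\sqrt{\pi n})$; the asymptotics
  of $\ell(\mathcal{M}_n)$ and of $\ell(\mathcal{M}_n)/M_n$ follow by linearity.
\<close>

subsection \<open>Trinomial coefficients\<close>

lemma trinom_0: "trinom 0 k = (if k = 0 then 1 else 0)"
  by (simp add: trinom_def)

lemma trinom_Suc:
  "trinom (Suc n) k = trinom n k + (if k \<ge> 1 then trinom n (k - 1) else 0)
                      + (if k \<ge> 2 then trinom n (k - 2) else 0)"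
proof -
  have "trinom (Suc n) k = coeff ([:1, 1, 1:] * [:1, 1, 1:] ^ n :: nat poly) k"
    by (simp add: trinom_def)
  also have "\<dots> = trinom n k + (if k \<ge> 1 then trinom n (k - 1) else 0)
                   + (if k \<ge> 2 then trinom n (k - 2) else 0)"
    by (cases k; cases "k - 1") (auto simp: trinom_def coeff_pCons')
  finally show ?thesis .
qed

text \<open>Expanding $(x^2 + (1+x))^n$ binomially gives an explicit formula.\<close>
lemma trinom_sum:
  "trinom n k = (\<Sum>j\<le>n. (n choose j) * (if 2*j \<le> k then (n - j) choose (k - 2*j) else 0))"
proof -
  have coeff_11: "coeff ([:1, 1:] ^ m :: nat poly) i = m choose i" for m i
  proof (cases "i \<le> m")
    case False
    have "degree ([:1, 1:] ^ m :: nat poly) \<le> m"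
      using degree_power_le[of "[:1, 1:] :: nat poly" m] by simp
    thus ?thesis using False by (simp add: coeff_eq_0)
  qed (use coeff_linear_poly_power[of i m "1::nat" 1] in simp)
  have split: "[:1, 1, 1:] = monom (1::nat) 2 + [:1, 1:]"
    by (simp add: monom_altdef numeral_2_eq_2 power2_eq_square monom_Suc monom_0)
  have "[:1, 1, 1:] ^ n = (\<Sum>j\<le>n. of_nat (n choose j) * monom (1::nat) 2 ^ j * [:1, 1:] ^ (n - j))"
    unfolding split by (rule binomial_ring)
  also have "\<dots> = (\<Sum>j\<le>n. monom (n choose j) (2*j) * [:1, 1:] ^ (n - j))"
    by (intro sum.cong refl) (simp add: monom_power of_nat_poly smult_monom mult.commute[of 2])
  finally have "trinom n k = (\<Sum>j\<le>n. coeff (monom (n choose j) (2*j) * [:1, 1:] ^ (n - j)) k)"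
    by (simp add: trinom_def coeff_sum)
  also have "\<dots> = (\<Sum>j\<le>n. (n choose j) * (if 2*j \<le> k then (n - j) choose (k - 2*j) else 0))"
    using coeff_11 by (intro sum.cong refl) (simp add: coeff_monom_mult)
  finally show ?thesis .
qed

text \<open>It is convenient to index trinomial coefficients by their offset from the centre:
  ctri n h $= [x^{n+h}](1+x+x^2)^n$, the number of sequences of $n$ steps U, D, H that end
  at height $h$ (with no positivity constraint).\<close>
definition ctri :: "nat \<Rightarrow> int \<Rightarrow> int" where
  "ctri n h = (if int n + h < 0 then 0 else int (trinom n (nat (int n + h))))"

lemma trinom_ctri: "int (trinom n k) = ctri n (int k - int n)"
  by (simp add: ctri_def)

lemma central_trinomial_ctri: "int (central_trinomial n) = ctri n 0"
  by (simp add: central_trinomial_def ctri_def)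

lemma ctri_0: "ctri 0 h = (if h = 0 then 1 else 0)"
  by (auto simp: ctri_def trinom_0)

lemma ctri_Suc: "ctri (Suc n) h = ctri n (h - 1) + ctri n h + ctri n (h + 1)"
proof (cases "int n + 1 + h < 0")
  case False
  define k where "k = nat (int n + 1 + h)"
  have k: "int k = int n + 1 + h" using False by (simp add: k_def)
  have "nat (int (Suc n) + h) = k" "k - 1 = nat (int n + h)"
       "k - 2 = nat (int n + (h - 1))" "k = nat (int n + (h + 1))"
    using k by linarith+
  moreover have "k \<ge> 1 \<longleftrightarrow> int n + h \<ge> 0" "k \<ge> 2 \<longleftrightarrow> int n + h - 1 \<ge> 0"
    using k by linarith+
  ultimately show ?thesis
    unfolding ctri_def using False by (simp add: trinom_Suc)
qed (simp add: ctri_def)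

lemma ctri_sym: "ctri n (- h) = ctri n h"
proof (induction n arbitrary: h)
  case (Suc n)
  have "ctri n (- h - 1) = ctri n (h + 1)" "ctri n (- h + 1) = ctri n (h - 1)"
    using Suc[of "h + 1"] Suc[of "h - 1"] by simp_all
  thus ?case using Suc[of h] by (simp add: ctri_Suc algebra_simps)
qed (simp add: ctri_0)

lemma ctri_nonneg: "ctri n h \<ge> 0"
  by (simp add: ctri_def)

lemma ctri_le: "ctri n h \<le> 3 ^ n"
proof (induction n arbitrary: h)
  case (Suc n)
  have "ctri n (h - 1) \<le> 3 ^ n" "ctri n h \<le> 3 ^ n" "ctri n (h + 1) \<le> 3 ^ n" using Suc by auto
  thus ?case by (simp add: ctri_Suc)
qed (simp add: ctri_0)

text \<open>A ballot-type identity: $h\,a_{n+1}(h) = (n+1)\,(a_n(h-1) - a_n(h+1))$.  It links the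
  number of paths counted with a ``last step'' weight to differences of trinomials.\<close>
lemma ctri_ballot: "h * ctri (Suc n) h = int (Suc n) * (ctri n (h - 1) - ctri n (h + 1))"
proof (induction n arbitrary: h)
  case 0 thus ?case by (simp add: ctri_Suc ctri_0)
next
  case (Suc n)
  have "h * ctri (Suc (Suc n)) h = (h - 1) * ctri (Suc n) (h - 1) + ctri (Suc n) (h - 1)
      + h * ctri (Suc n) h + (h + 1) * ctri (Suc n) (h + 1) - ctri (Suc n) (h + 1)"
    by (subst ctri_Suc[of "Suc n"]) (simp add: algebra_simps)
  moreover have "ctri (Suc n) (h - 1) = ctri n (h - 2) + ctri n (h - 1) + ctri n h"
    using ctri_Suc[of n "h - 1"] by simp
  moreover have "ctri (Suc n) (h + 1) = ctri n h + ctri n (h + 1) + ctri n (h + 2)"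
    using ctri_Suc[of n "h + 1"] by (simp add: algebra_simps)
  moreover have "(h - 1) * ctri (Suc n) (h - 1) = int (Suc n) * (ctri n (h - 2) - ctri n h)"
    using Suc[of "h - 1"] by (simp add: algebra_simps)
  moreover have "(h + 1) * ctri (Suc n) (h + 1) = int (Suc n) * (ctri n h - ctri n (h + 2))"
    using Suc[of "h + 1"] by (simp add: algebra_simps)
  ultimately show ?case using Suc[of h] by (simp add: algebra_simps)
qed

subsection \<open>Height profiles and meanders\<close>

definition ht :: "step list \<Rightarrow> nat \<Rightarrow> int" where
  "ht p j = height (take j p)"

lemma ht_0 [simp]: "ht p 0 = 0"
  by (simp add: ht_def height_def)

lemma ht_Suc: "j < length p \<Longrightarrow> ht p (Suc j) = ht p j + step_val (p ! j)"
  by (simp add: ht_def height_def take_Suc_conv_app_nth)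

lemma ht_step_bound: "j < length p \<Longrightarrow> \<bar>ht p (Suc j) - ht p j\<bar> \<le> 1"
  using ht_Suc[of j p] by (cases "p ! j") auto

lemma ht_eq_imp_eq:
  assumes "length p = length q" "\<And>j. j \<le> length p \<Longrightarrow> ht p j = ht q j"
  shows "p = q"
proof (rule nth_equalityI)
  fix i assume i: "i < length p"
  have "step_val (p ! i) = ht p (Suc i) - ht p i" using ht_Suc[OF i] by simp
  also have "\<dots> = ht q (Suc i) - ht q i" using assms(2) i by simp
  also have "\<dots> = step_val (q ! i)" using ht_Suc[of i q] i assms(1) by simp
  finally show "p ! i = q ! i" by (cases "p ! i"; cases "q ! i") auto
qed fact

lemma ht_update:
  assumes "k < length p"
  shows "ht (p[k := x]) j = ht p j + (if k < j then step_val x - step_val (p ! k) else 0)"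
proof (cases "k < j")
  case True
  have sum_upd: "sum_list (xs[k := v]) = sum_list xs + v - xs ! k" if "k < length xs"
    for xs :: "int list" and v using that
    by (induction xs arbitrary: k) (auto split: nat.splits)
  have "take j (p[k := x]) = (take j p)[k := x]" by (simp add: take_update_swap)
  thus ?thesis using True assms by (simp add: ht_def height_def map_update sum_upd)
qed (simp add: ht_def)

definition meanders :: "nat \<Rightarrow> int \<Rightarrow> step list set" where
  "meanders n h = {p. length p = n \<and> (\<forall>i\<le>n. height (take i p) \<ge> 0) \<and> height p = h}"

lemma motzkin_paths_meanders: "motzkin_paths n = meanders n 0"
  by (simp add: motzkin_paths_def meanders_def)

lemma meanders_ht: "p \<in> meanders n h \<longleftrightarrow> length p = n \<and> (\<forall>i\<le>n. ht p i \<ge> 0) \<and> ht p n = h"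
  by (auto simp: meanders_def ht_def)

lemma path_le_ht: "path_le p q \<longleftrightarrow> length p = length q \<and> (\<forall>i\<le>length p. ht p i \<le> ht q i)"
  by (simp add: path_le_def ht_def)

lemma finite_meanders: "finite (meanders n h)"
proof (rule finite_subset)
  show "meanders n h \<subseteq> {xs. set xs \<subseteq> UNIV \<and> length xs = n}" by (auto simp: meanders_def)
  have steps: "(UNIV :: step set) = {U, D, H}" by (auto intro: step.exhaust)
  show "finite {xs. set xs \<subseteq> (UNIV :: step set) \<and> length xs = n}"
    by (rule finite_lists_length_eq) (simp add: steps)
qed

subsection \<open>The covering relation of the Motzkin lattice\<close>

text \<open>Raising the path by one unit at an interior point i replaces the steps around i by
  steps one unit higher: the step before i moves up (D to H, H to U) and the step after i
  moves down (U to H, H to D).  This is possible exactly at the positions in raisable p.\<close>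
fun step_up :: "step \<Rightarrow> step" where
  "step_up D = H" | "step_up H = U" | "step_up U = U"

fun step_down :: "step \<Rightarrow> step" where
  "step_down U = H" | "step_down H = D" | "step_down D = D"

definition raisable :: "step list \<Rightarrow> nat set" where
  "raisable p = {i. 0 < i \<and> i < length p \<and> p ! (i - 1) \<noteq> U \<and> p ! i \<noteq> D}"

definition raise_at :: "step list \<Rightarrow> nat \<Rightarrow> step list" where
  "raise_at p i = (p[i - 1 := step_up (p ! (i - 1))])[i := step_down (p ! i)]"

lemma finite_raisable: "finite (raisable p)"
  by (rule finite_subset[of _ "{..<length p}"]) (auto simp: raisable_def)

lemma length_raise_at [simp]: "length (raise_at p i) = length p"
  by (simp add: raise_at_def)

lemma ht_raise_at:
  assumes "i \<in> raisable p"
  shows "ht (raise_at p i) j = ht p j + (if j = i then 1 else 0)"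
proof -
  from assms have i: "0 < i" "i < length p" "p ! (i - 1) \<noteq> U" "p ! i \<noteq> D"
    by (auto simp: raisable_def)
  define q where "q = p[i - 1 := step_up (p ! (i - 1))]"
  have up: "step_val (step_up (p ! (i - 1))) = step_val (p ! (i - 1)) + 1"
    using i(3) by (cases "p ! (i - 1)") auto
  have down: "step_val (step_down (p ! i)) = step_val (p ! i) - 1"
    using i(4) by (cases "p ! i") auto
  have "ht (raise_at p i) j = ht q j + (if i < j then step_val (step_down (p ! i)) - step_val (q ! i) else 0)"
    unfolding raise_at_def q_def[symmetric] using i by (intro ht_update) (simp add: q_def)
  also have "ht q j = ht p j + (if i - 1 < j then step_val (step_up (p ! (i - 1))) - step_val (p ! (i - 1)) else 0)"
    unfolding q_def using i by (intro ht_update) simp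
  finally show ?thesis using up down i by (auto simp: q_def)
qed

lemma raise_at_in_meanders:
  assumes "a \<in> meanders n 0" "i \<in> raisable a"
  shows "raise_at a i \<in> meanders n 0"
proof -
  have "i < n" using assms by (auto simp: raisable_def meanders_def)
  thus ?thesis using assms ht_raise_at[OF assms(2)] by (auto simp: meanders_ht)
qed

text \<open>Every raise is a covering pair: nothing fits strictly between a and its raise,
  since their height profiles differ at one point only, by one.\<close>
lemma raise_at_covers:
  assumes a: "a \<in> meanders n 0" and i: "i \<in> raisable a"
  shows "(a, raise_at a i) \<in> covers (meanders n 0) path_le"
proof -
  let ?b = "raise_at a i"
  have la: "length a = n" using a by (simp add: meanders_def)
  have hb: "\<And>j. ht ?b j = ht a j + (if j = i then 1 else 0)" using ht_raise_at[OF i] .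
  have "\<not> (\<exists>c\<in>meanders n 0. c \<noteq> a \<and> c \<noteq> ?b \<and> path_le a c \<and> path_le c ?b)"
  proof
    assume "\<exists>c\<in>meanders n 0. c \<noteq> a \<and> c \<noteq> ?b \<and> path_le a c \<and> path_le c ?b"
    then obtain c where c: "c \<in> meanders n 0" "c \<noteq> a" "c \<noteq> ?b" "path_le a c" "path_le c ?b"
      by blast
    have lc: "length c = n" using c(1) by (simp add: meanders_def)
    have between: "ht a j \<le> ht c j" "ht c j \<le> ht ?b j" if "j \<le> n" for j
      using c(4,5) la lc that by (auto simp: path_le_ht)
    have off_i: "ht c j = ht a j" if "j \<le> n" "j \<noteq> i" for j
      using between[OF that(1)] hb[of j] that by simp
    have "i \<le> n" using i la by (simp add: raisable_def)
    show False
    proof (cases "ht c i = ht a i")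
      case True
      have "c = a" by (rule ht_eq_imp_eq) (use lc la off_i True in auto)
      thus False using c(2) by simp
    next
      case False
      hence "ht c i = ht ?b i" using between[OF \<open>i \<le> n\<close>] hb[of i] by simp
      hence "c = ?b" using lc la off_i hb by (intro ht_eq_imp_eq) auto
      thus False using c(3) by simp
    qed
  qed
  moreover have "a \<noteq> ?b" using hb[of i] by auto
  moreover have "path_le a ?b" using hb la by (simp add: path_le_ht)
  ultimately show ?thesis using a raise_at_in_meanders[OF a i] by (simp add: covers_def)
qed

text \<open>If a lies weakly below b, then at a point i where a lies strictly below b and which is
  lowest for a among all such points, a can be raised: a step U into i or a step D out of i
  would produce a lower gap point or force b to move by two units in one step.\<close>
lemma lowest_gap_raisable:
  assumes a: "a \<in> meanders n 0" and b: "b \<in> meanders n 0"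
    and le: "\<And>j. j \<le> n \<Longrightarrow> ht a j \<le> ht b j"
    and gap: "i \<le> n" "ht a i < ht b i"
    and lowest: "\<And>j. j \<le> n \<Longrightarrow> ht a j < ht b j \<Longrightarrow> ht a i \<le> ht a j"
  shows "i \<in> raisable a"
proof -
  have la: "length a = n" and lb: "length b = n" using a b by (auto simp: meanders_def)
  have "i \<noteq> 0" using gap by (cases i) auto
  have "i \<noteq> n" using gap a b by (auto simp: meanders_ht)
  have "a ! (i - 1) \<noteq> U"
  proof
    assume "a ! (i - 1) = U"
    hence up: "ht a i = ht a (i - 1) + 1" using ht_Suc[of "i - 1" a] \<open>i \<noteq> 0\<close> gap la by simp
    have "i - 1 < length b" using \<open>i \<noteq> 0\<close> gap lb by simp
    hence "ht b i \<le> ht b (i - 1) + 1"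
      using ht_step_bound[of "i - 1" b] \<open>i \<noteq> 0\<close> by (simp add: abs_le_iff)
    thus False using le[of "i - 1"] lowest[of "i - 1"] up gap by fastforce
  qed
  moreover have "a ! i \<noteq> D"
  proof
    assume "a ! i = D"
    hence down: "ht a (Suc i) = ht a i - 1" using ht_Suc[of i a] \<open>i \<noteq> n\<close> gap la by simp
    have "ht b i \<le> ht b (Suc i) + 1"
      using ht_step_bound[of i b] gap \<open>i \<noteq> n\<close> lb by (simp add: abs_le_iff)
    thus False using le[of "Suc i"] lowest[of "Suc i"] down gap \<open>i \<noteq> n\<close> by fastforce
  qed
  ultimately show ?thesis using \<open>i \<noteq> 0\<close> \<open>i \<noteq> n\<close> gap la by (auto simp: raisable_def)
qed

text \<open>Conversely every covering pair (a, b) is a raise: raising a at a lowest gap point gives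
  a path between a and b, which therefore must be b.\<close>
lemma covers_raise_at:
  assumes cv: "(a, b) \<in> covers (meanders n 0) path_le"
  shows "\<exists>i\<in>raisable a. b = raise_at a i"
proof -
  from cv have a: "a \<in> meanders n 0" and b: "b \<in> meanders n 0" and "a \<noteq> b" "path_le a b"
    and nothing_between: "\<not> (\<exists>c\<in>meanders n 0. c \<noteq> a \<and> c \<noteq> b \<and> path_le a c \<and> path_le c b)"
    by (auto simp: covers_def)
  have la: "length a = n" and lb: "length b = n" using a b by (auto simp: meanders_def)
  have le: "\<And>j. j \<le> n \<Longrightarrow> ht a j \<le> ht b j" using \<open>path_le a b\<close> la by (simp add: path_le_ht)
  define S where "S = {j. j \<le> n \<and> ht a j < ht b j}"
  have "S \<noteq> {}"
  proof
    assume "S = {}"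
    hence "a = b" using la lb le by (intro ht_eq_imp_eq) (force simp: S_def)+
    thus False using \<open>a \<noteq> b\<close> by simp
  qed
  moreover have "finite S" by (simp add: S_def)
  ultimately have "Min (ht a ` S) \<in> ht a ` S" by (intro Min_in) auto
  then obtain i where iS: "i \<in> S" and i_min: "ht a i = Min (ht a ` S)" by auto
  have i: "i \<le> n" "ht a i < ht b i" using iS by (auto simp: S_def)
  have "i \<in> raisable a"
  proof (rule lowest_gap_raisable[OF a b le i])
    fix j assume "j \<le> n" "ht a j < ht b j"
    thus "ht a i \<le> ht a j" unfolding i_min using \<open>finite S\<close> by (intro Min_le) (auto simp: S_def)
  qed
  let ?c = "raise_at a i"
  have hc: "\<And>j. ht ?c j = ht a j + (if j = i then 1 else 0)" using ht_raise_at[OF \<open>i \<in> raisable a\<close>] .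
  have "path_le a ?c" "path_le ?c b" using hc la lb le i by (auto simp: path_le_ht)
  moreover have "?c \<noteq> a" using hc[of i] by auto
  ultimately have "?c = b" using nothing_between raise_at_in_meanders[OF a \<open>i \<in> raisable a\<close>] by blast
  thus ?thesis using \<open>i \<in> raisable a\<close> by auto
qed

lemma ellM_raisable_sum: "ellM n = (\<Sum>a\<in>meanders n 0. card (raisable a))"
proof -
  let ?f = "\<lambda>(a, i). (a, raise_at a i)"
  have eq: "covers (meanders n 0) path_le = ?f ` Sigma (meanders n 0) raisable"
  proof (intro equalityI subsetI)
    fix x assume x: "x \<in> covers (meanders n 0) path_le"
    obtain a b where "x = (a, b)" by fastforce
    moreover have "a \<in> meanders n 0" using x \<open>x = (a, b)\<close> by (auto simp: covers_def)
    moreover obtain i where "i \<in> raisable a" "b = raise_at a i"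
      using covers_raise_at x \<open>x = (a, b)\<close> by blast
    ultimately show "x \<in> ?f ` Sigma (meanders n 0) raisable" by force
  qed (use raise_at_covers in auto)
  have "inj_on ?f (Sigma (meanders n 0) raisable)"
  proof (rule inj_onI, clarsimp)
    fix a i j assume "i \<in> raisable a" "j \<in> raisable a" "raise_at a i = raise_at a j"
    thus "i = j" using ht_raise_at[of i a i] ht_raise_at[of j a i] by (auto split: if_splits)
  qed
  hence "card (covers (meanders n 0) path_le) = card (Sigma (meanders n 0) raisable)"
    unfolding eq by (rule card_image)
  also have "\<dots> = (\<Sum>a\<in>meanders n 0. card (raisable a))"
    by (rule card_SigmaI) (auto simp: finite_meanders finite_raisable)
  finally show ?thesis by (simp add: ellM_def hasse_edges_def motzkin_paths_meanders)
qed

fun count_H :: "step list \<Rightarrow> nat" where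
  "count_H [] = 0"
| "count_H (x # xs) = (if x = H then 1 else 0) + count_H xs"

fun count_peaks :: "step list \<Rightarrow> nat" where
  "count_peaks (x # y # xs) = (if x = U \<and> y = D then 1 else 0) + count_peaks (y # xs)"
| "count_peaks _ = 0"

fun count_raisable :: "step list \<Rightarrow> nat" where
  "count_raisable (x # y # xs) = (if x \<noteq> U \<and> y \<noteq> D then 1 else 0) + count_raisable (y # xs)"
| "count_raisable _ = 0"

lemma raisable_Cons2:
  "raisable (x # y # xs) = (if x \<noteq> U \<and> y \<noteq> D then insert 1 (Suc ` raisable (y # xs))
                                               else Suc ` raisable (y # xs))"
proof -
  have "i \<in> raisable (x # y # xs) \<longleftrightarrow>
          (i = 1 \<and> x \<noteq> U \<and> y \<noteq> D) \<or> (\<exists>j. i = Suc j \<and> j \<in> raisable (y # xs))" for i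
    by (cases i; cases "i - 1") (auto simp: raisable_def)
  thus ?thesis by auto
qed

lemma card_raisable: "card (raisable p) = count_raisable p"
proof (induction p rule: count_raisable.induct)
  case (1 x y xs)
  have "0 \<notin> raisable (y # xs)" by (simp add: raisable_def)
  hence "1 \<notin> Suc ` raisable (y # xs)" by auto
  moreover have "card (Suc ` raisable (y # xs)) = card (raisable (y # xs))" by (simp add: card_image)
  ultimately show ?case using 1
    by (cases "x \<noteq> U \<and> y \<noteq> D") (simp_all only: raisable_Cons2 if_True if_False,
        simp_all add: finite_raisable)
qed (auto simp: raisable_def)

text \<open>Along a nonempty path, a pair of consecutive steps is non-raisable iff it is a peak
  or contains no H; counting boundary effects gives the following identity.\<close>
lemma count_raisable_identity:
  "q \<noteq> [] \<Longrightarrow> int (count_raisable q) + (if hd q \<noteq> D then 1 else 0) + (if last q \<noteq> U then 1 else 0)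
     = int (count_H q) + int (count_peaks q) + 1"
proof (induction q rule: count_raisable.induct)
  case (1 x y xs) thus ?case by (cases x; cases y) auto
next
  case ("2_2" v) thus ?case by (cases v) auto
qed simp

lemma motzkin_hd_last:
  assumes "p \<in> meanders (Suc n) 0"
  shows "p \<noteq> []" "hd p \<noteq> D" "last p \<noteq> U"
proof -
  have lp: "length p = Suc n" using assms by (simp add: meanders_def)
  thus "p \<noteq> []" by auto
  have "ht p 1 \<ge> 0" "ht p 1 = step_val (p ! 0)"
    using assms lp ht_Suc[of 0 p] by (auto simp: meanders_ht)
  moreover have "hd p = p ! 0" using \<open>p \<noteq> []\<close> by (simp add: hd_conv_nth)
  ultimately show "hd p \<noteq> D" by auto
  have "ht p n \<ge> 0" "ht p (Suc n) = 0" "ht p (Suc n) = ht p n + step_val (p ! n)"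
    using assms lp ht_Suc[of n p] by (auto simp: meanders_ht)
  moreover have "last p = p ! n" using lp \<open>p \<noteq> []\<close> by (simp add: last_conv_nth)
  ultimately show "last p \<noteq> U" by auto
qed

lemma ellM_statistics:
  "int (ellM (Suc n)) = (\<Sum>p\<in>meanders (Suc n) 0. int (count_H p) + int (count_peaks p) - 1)"
  unfolding ellM_raisable_sum card_raisable of_nat_sum
proof (rule sum.cong)
  fix p assume "p \<in> meanders (Suc n) 0"
  thus "int (count_raisable p) = int (count_H p) + int (count_peaks p) - 1"
    using count_raisable_identity[of p] motzkin_hd_last[of p n] by simp
qed simp

subsection \<open>Meanders: the last-step decomposition and the reflection principle\<close>

lemma meanders_neg: "h < 0 \<Longrightarrow> meanders n h = {}"
  by (auto simp: meanders_def)

lemma meanders_0: "meanders 0 h = (if h = 0 then {[]} else {})"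
  by (auto simp: meanders_def height_def)

lemma height_snoc [simp]: "height (p @ [x]) = height p + step_val x"
  by (simp add: height_def)

lemma meanders_Suc:
  assumes "h \<ge> 0"
  shows "meanders (Suc n) h = (\<lambda>p. p @ [D]) ` meanders n (h + 1)
           \<union> (\<lambda>p. p @ [H]) ` meanders n h \<union> (\<lambda>p. p @ [U]) ` meanders n (h - 1)"
proof (intro equalityI subsetI)
  fix q assume q: "q \<in> meanders (Suc n) h"
  hence "q \<noteq> []" by (auto simp: meanders_def)
  then obtain p x where qpx: "q = p @ [x]" by (metis append_butlast_last_id)
  have lp: "length p = n" using q qpx by (simp add: meanders_def)
  have "\<forall>i\<le>n. height (take i p) \<ge> 0"
  proof (intro allI impI)
    fix i assume "i \<le> n"
    hence "take i q = take i p" using qpx lp by simp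
    moreover have "height (take i q) \<ge> 0" using q \<open>i \<le> n\<close> by (simp add: meanders_def)
    ultimately show "height (take i p) \<ge> 0" by simp
  qed
  moreover have "height p + step_val x = h" using q qpx by (simp add: meanders_def)
  ultimately show "q \<in> (\<lambda>p. p @ [D]) ` meanders n (h + 1)
           \<union> (\<lambda>p. p @ [H]) ` meanders n h \<union> (\<lambda>p. p @ [U]) ` meanders n (h - 1)"
    using lp qpx by (cases x) (auto simp: meanders_def)
next
  fix q assume "q \<in> (\<lambda>p. p @ [D]) ` meanders n (h + 1)
           \<union> (\<lambda>p. p @ [H]) ` meanders n h \<union> (\<lambda>p. p @ [U]) ` meanders n (h - 1)"
  then obtain p x g where qpx: "q = p @ [x]" and p: "p \<in> meanders n g" and g: "g + step_val x = h"
    by auto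
  have lp: "length p = n" using p by (simp add: meanders_def)
  have "height (take i q) \<ge> 0" if "i \<le> Suc n" for i
    using that p g assms qpx lp by (cases "i = Suc n") (auto simp: meanders_def)
  thus "q \<in> meanders (Suc n) h" using qpx lp p g by (simp add: meanders_def)
qed

lemma sum_meanders_Suc:
  fixes f :: "step list \<Rightarrow> int"
  assumes "h \<ge> 0"
  shows "(\<Sum>q\<in>meanders (Suc n) h. f q) = (\<Sum>p\<in>meanders n (h + 1). f (p @ [D]))
           + (\<Sum>p\<in>meanders n h. f (p @ [H])) + (\<Sum>p\<in>meanders n (h - 1). f (p @ [U]))"
proof -
  have inj: "inj_on (\<lambda>p. p @ [x]) A" for x A by (auto intro: inj_onI)
  have disj: "(\<lambda>p. p @ [x]) ` A \<inter> (\<lambda>p. p @ [y]) ` B = {}" if "x \<noteq> y" for x y A B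
    using that by auto
  show ?thesis
    unfolding meanders_Suc[OF assms]
    by (subst sum.union_disjoint, simp_all add: finite_meanders disj Int_Un_distrib2)+
       (simp add: sum.reindex[OF inj])
qed

definition n_meanders :: "nat \<Rightarrow> int \<Rightarrow> int" where
  "n_meanders n h = int (card (meanders n h))"

lemma n_meanders_Suc:
  "h \<ge> 0 \<Longrightarrow> n_meanders (Suc n) h = n_meanders n (h + 1) + n_meanders n h + n_meanders n (h - 1)"
  using sum_meanders_Suc[of h "\<lambda>_. 1" n] by (simp add: n_meanders_def)

lemma n_meanders_reflection: "h \<ge> 0 \<Longrightarrow> n_meanders n h = ctri n h - ctri n (h + 2)"
proof (induction n arbitrary: h)
  case 0 thus ?case by (simp add: n_meanders_def meanders_0 ctri_0)
next
  case (Suc n)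
  show ?case
  proof (cases "h = 0")
    case True
    have "n_meanders n (-1) = 0" by (simp add: n_meanders_def meanders_neg)
    moreover have "ctri n (-1) = ctri n 1" using ctri_sym[of n 1] by simp
    ultimately show ?thesis using True Suc.IH[of 1] Suc.IH[of 0] by (simp add: n_meanders_Suc ctri_Suc)
  next
    case False
    thus ?thesis using Suc.IH[of "h + 1"] Suc.IH[of h] Suc.IH[of "h - 1"] Suc.prems
      by (simp add: n_meanders_Suc ctri_Suc algebra_simps)
  qed
qed

lemma motzkin_ctri: "int (motzkin n) = ctri n 0 - ctri n 2"
  using n_meanders_reflection[of 0 n]
  by (simp add: motzkin_def motzkin_paths_meanders n_meanders_def)

text \<open>Summed over all meanders of length n ending at h, there are n N(n-1,h) horizontal
  steps: removing one H step is an n-to-1 correspondence onto meanders of length n-1.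
  We prove it by induction along the last-step decomposition.\<close>
lemma count_H_snoc [simp]: "count_H (p @ [x]) = count_H p + (if x = H then 1 else 0)"
  by (induction p) auto

lemma sum_count_H: "(\<Sum>p\<in>meanders n h. int (count_H p)) = int n * n_meanders (n - 1) h"
proof (induction n arbitrary: h)
  case 0 thus ?case by (simp add: meanders_0)
next
  case (Suc n)
  show ?case
  proof (cases "h \<ge> 0")
    case True
    have "(\<Sum>p\<in>meanders (Suc n) h. int (count_H p))
          = (\<Sum>p\<in>meanders n (h + 1). int (count_H p)) + ((\<Sum>p\<in>meanders n h. int (count_H p))
            + n_meanders n h) + (\<Sum>p\<in>meanders n (h - 1). int (count_H p))"
      using sum_meanders_Suc[OF True, of "\<lambda>q. int (count_H q)" n]
      by (simp add: sum.distrib n_meanders_def)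
    also have "\<dots> = int n * (n_meanders (n - 1) (h + 1) + n_meanders (n - 1) h
                    + n_meanders (n - 1) (h - 1)) + n_meanders n h"
      using Suc.IH by (simp add: algebra_simps)
    also have "\<dots> = int (Suc n) * n_meanders n h"
      using n_meanders_Suc[OF True, of "n - 1"] by (cases n) (simp_all add: algebra_simps)
    finally show ?thesis by simp
  qed (simp add: meanders_neg n_meanders_def)
qed

text \<open>Likewise there are n N(n-1,h) peaks in total among meanders of length n+1 ending at h
  (removing a peak UD is again n-to-1).\<close>
lemma count_peaks_snoc [simp]:
  "count_peaks (p @ [x]) = count_peaks p + (if x = D \<and> p \<noteq> [] \<and> last p = U then 1 else 0)"
  by (induction p rule: count_peaks.induct) auto

lemma sum_last_U:
  "(\<Sum>p\<in>meanders (Suc n) h. (if p \<noteq> [] \<and> last p = U then 1 else 0 :: int)) = n_meanders n (h - 1)"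
proof (cases "h \<ge> 0")
  case True
  show ?thesis using sum_meanders_Suc[OF True, of "\<lambda>p. (if p \<noteq> [] \<and> last p = U then 1 else 0 :: int)" n]
    by (simp add: n_meanders_def)
qed (simp add: meanders_neg n_meanders_def)

lemma sum_count_peaks:
  "(\<Sum>p\<in>meanders (Suc n) h. int (count_peaks p)) = int n * n_meanders (n - 1) h"
proof (induction n arbitrary: h)
  case 0
  show ?case
  proof (cases "h \<ge> 0")
    case True thus ?thesis using sum_meanders_Suc[OF True, of "\<lambda>q. int (count_peaks q)" 0]
      by (simp add: meanders_0)
  qed (simp add: meanders_neg)
next
  case (Suc n)
  have int_if_01: "int (if P then 1 else 0) = (if P then 1 else 0)" for P by simp
  show ?case
  proof (cases "h \<ge> 0")
    case True
    have "(\<Sum>p\<in>meanders (Suc (Suc n)) h. int (count_peaks p))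
          = ((\<Sum>p\<in>meanders (Suc n) (h + 1). int (count_peaks p))
             + (\<Sum>p\<in>meanders (Suc n) (h + 1). (if p \<noteq> [] \<and> last p = U then 1 else 0 :: int)))
            + (\<Sum>p\<in>meanders (Suc n) h. int (count_peaks p))
            + (\<Sum>p\<in>meanders (Suc n) (h - 1). int (count_peaks p))"
      using sum_meanders_Suc[OF True, of "\<lambda>q. int (count_peaks q)" "Suc n"]
      by (simp add: sum.distrib of_nat_add int_if_01)
    also have "\<dots> = int n * (n_meanders (n - 1) (h + 1) + n_meanders (n - 1) h
                    + n_meanders (n - 1) (h - 1)) + n_meanders n h"
      using Suc.IH sum_last_U[of n "h + 1"] by (simp add: algebra_simps)
    also have "\<dots> = int (Suc n) * n_meanders n h"
      using n_meanders_Suc[OF True, of "n - 1"] by (cases n) (simp_all add: algebra_simps)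
    finally show ?thesis by simp
  qed (simp add: meanders_neg n_meanders_def)
qed

lemma ellM_Suc_ctri: "int (ellM (Suc m)) = ctri (Suc m) 2 + ctri m 2"
proof -
  have "int (ellM (Suc m)) = int (Suc m) * n_meanders m 0 + int m * n_meanders (m - 1) 0
                               - n_meanders (Suc m) 0"
    unfolding ellM_statistics sum_subtractf sum.distrib
    using sum_count_H[of "Suc m" 0] sum_count_peaks[of m 0] by (simp add: n_meanders_def)
  also have "int (Suc m) * n_meanders m 0 = ctri (Suc m) 1"
    using ctri_ballot[of 1 m] n_meanders_reflection[of 0 m] by simp
  also have "int m * n_meanders (m - 1) 0 = ctri m 1"
    using ctri_ballot[of 1 "m - 1"] n_meanders_reflection[of 0 "m - 1"]
    by (cases m) (simp_all add: ctri_0)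
  also have "ctri (Suc m) 1 + ctri m 1 - n_meanders (Suc m) 0 = ctri (Suc m) 2 + ctri m 2"
    using n_meanders_reflection[of 0 "Suc m"] ctri_Suc[of m 0] ctri_Suc[of m 1] ctri_sym[of m 1]
    by simp
  finally show ?thesis .
qed

lemma ellM_0: "ellM 0 = 0"
  using ellM_raisable_sum[of 0] by (simp add: meanders_0 raisable_def)

lemma ellM_central_motzkin:
  assumes "n \<ge> 1"
  shows "int (ellM n) = int (central_trinomial n) - int (motzkin n)
                        + int (central_trinomial (n - 1)) - int (motzkin (n - 1))"
proof -
  obtain m where "n = Suc m" using assms by (cases n) auto
  thus ?thesis using ellM_Suc_ctri[of m] by (simp add: central_trinomial_ctri motzkin_ctri)
qed

lemma ellM_trinom_below_centre:
  assumes "n \<ge> 3"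
  shows "ellM n = trinom n (n - 2) + trinom (n - 1) (n - 3)"
proof -
  obtain m where n: "n = Suc m" using assms by (cases n) auto
  have "int (ellM n) = ctri n (-2) + ctri m (-2)"
    using ellM_Suc_ctri[of m] ctri_sym[of n 2] ctri_sym[of m 2] n by simp
  also have "\<dots> = int (trinom n (n - 2)) + int (trinom (n - 1) (n - 3))"
    using assms n by (simp add: trinom_ctri of_nat_diff)
  finally show ?thesis by linarith
qed

text \<open>The trinomial weight $\binom nk\binom{n-k}{k} = n!/(k!\,k!\,(n-2k)!)$ counts step
  sequences of length n with k steps U and k steps D.\<close>
definition tri_weight :: "nat \<Rightarrow> nat \<Rightarrow> real" where
  "tri_weight n k = real (n choose k) * real ((n - k) choose k)"

lemma tri_weight_eq_0: "2 * k > n \<Longrightarrow> tri_weight n k = 0"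
  by (simp add: tri_weight_def) arith

lemma binomial_product_fact:
  assumes "a + b \<le> n"
  shows "real (n choose a) * real ((n - a) choose b) = fact n / (fact a * fact b * fact (n - a - b))"
  using assms by (simp add: binomial_fact field_simps)

lemma tri_weight_fact: "2 * k \<le> n \<Longrightarrow> tri_weight n k = fact n / (fact k * fact k * fact (n - 2 * k))"
  unfolding tri_weight_def by (subst binomial_product_fact) (simp_all add: mult_2)

lemma trinom_above_centre_term:
  "real ((n choose Suc i) * (if 2 * Suc i \<le> n + 2 then (n - Suc i) choose (n + 2 - 2 * Suc i) else 0))
     = tri_weight n i * real i / (real i + 1)"
proof (cases "2 * i \<le> n \<and> i \<ge> 1")
  case True
  then obtain j where i: "i = Suc j" by (cases i) auto
  have "real (n choose Suc i) * real ((n - Suc i) choose (n - 2 * i))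
          = fact n / (fact (Suc i) * fact (n - 2 * i) * fact (n - Suc i - (n - 2 * i)))"
    using True by (intro binomial_product_fact) auto
  also have "n - Suc i - (n - 2 * i) = j" using True i by simp
  also have "fact (Suc i) = (real i + 1) * fact i" by simp
  also have "fact n / ((real i + 1) * fact i * fact (n - 2 * i) * fact j)
               = fact n / (fact i * (real i * fact j) * fact (n - 2 * i)) * real i / (real i + 1)"
    using True by (simp add: field_simps)
  also have "real i * fact j = fact i" by (simp add: i)
  also have "fact n / (fact i * fact i * fact (n - 2 * i)) = tri_weight n i"
    using True by (simp add: tri_weight_fact)
  finally show ?thesis using True by simp
next
  case False
  thus ?thesis by (cases "i = 0") (auto simp: tri_weight_eq_0)
qed

lemma trinom_above_centre: "real (trinom n (n + 2)) = (\<Sum>i\<le>n. tri_weight n i * real i / (real i + 1))"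
proof -
  define f where "f j = (n choose j) * (if 2 * j \<le> n + 2 then (n - j) choose (n + 2 - 2 * j) else 0)" for j
  have "trinom n (n + 2) = (\<Sum>j\<le>n. f j)" by (simp only: trinom_sum f_def)
  also have "\<dots> = (\<Sum>j\<le>Suc n. f j)" by (simp add: f_def)
  also have "\<dots> = (\<Sum>i\<le>n. f (Suc i))" by (simp only: sum.atMost_Suc_shift) (simp add: f_def)
  finally show ?thesis using trinom_above_centre_term unfolding f_def by simp
qed

lemma tri_weight_pred:
  assumes "n \<ge> 1"
  shows "tri_weight (n - 1) k * real n = tri_weight n k * (real n - 2 * real k)"
proof (cases "2 * k \<le> n - 1")
  case True
  obtain r where r: "n - 2 * k = Suc r" using True assms by (intro that[of "n - 1 - 2 * k"]) simp
  have "tri_weight (n - 1) k * real n = real n * fact (n - 1) / (fact k * fact k * fact r)"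
  proof -
    have "n - Suc (2 * k) = r" using r by simp
    thus ?thesis using True by (simp add: tri_weight_fact)
  qed
  also have "real n * fact (n - 1) = fact n" using assms fact_reduce[of n, where 'a = real] by simp
  also have "fact n / (fact k * fact k * fact r)
               = fact n / (fact k * fact k * fact (n - 2 * k)) * real (Suc r)"
    unfolding r by simp
  also have "real (Suc r) = real n - 2 * real k" using r True by linarith
  finally show ?thesis using True by (simp add: tri_weight_fact)
next
  case False
  hence "2 * k = n \<or> 2 * k > n" by arith
  thus ?thesis using False by (auto simp: tri_weight_eq_0)
qed

lemma ellM_binomial_sum:
  assumes "n \<ge> 1"
  shows "real (ellM n) = 2 / real n *
           (\<Sum>k=0..n div 2. real (n choose k) * real ((n - k) choose k)
                            * (real k * real (n - k)) / (real k + 1))"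
proof -
  obtain m where n: "n = Suc m" using assms by (cases n) auto
  have above: "nat (int k + 2) = k + 2" for k :: nat by simp
  have "real_of_int (int (ellM n)) = real_of_int (ctri n 2 + ctri m 2)"
    using ellM_Suc_ctri[of m] n by simp
  hence "real (ellM n) = real (trinom n (n + 2)) + real (trinom m (m + 2))"
    by (simp add: ctri_def above)
  also have "\<dots> = (\<Sum>k\<le>n. tri_weight n k * real k / (real k + 1)
                          + tri_weight m k * real k / (real k + 1))"
    unfolding trinom_above_centre sum.distrib using n by (simp add: tri_weight_eq_0)
  also have "\<dots> = (\<Sum>k\<le>n. 2 / real n * (tri_weight n k * (real k * real (n - k)) / (real k + 1)))"
  proof (rule sum.cong[OF refl])
    fix k assume "k \<in> {..n}"
    have combine: "w * a / (a + 1) + w * (N - 2 * a) / N * a / (a + 1) = 2 / N * (w * (a * (N - a)) / (a + 1))"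
      if "N \<noteq> 0" "a + 1 \<noteq> 0" for w a N :: real
    proof -
      have "w * a / (a + 1) + w * (N - 2 * a) / N * a / (a + 1) = (w * a * N + w * (N - 2 * a) * a) / (N * (a + 1))"
        using that by (simp add: add_divide_distrib)
      also have "w * a * N + w * (N - 2 * a) * a = 2 * (w * (a * (N - a)))" by (simp add: algebra_simps)
      finally show ?thesis by simp
    qed
    have "tri_weight m k = tri_weight n k * (real n - 2 * real k) / real n"
      using tri_weight_pred[OF assms, of k] n assms by (simp add: field_simps)
    moreover have "real (n - k) = real n - real k" using \<open>k \<in> {..n}\<close> by (simp add: of_nat_diff)
    ultimately show "tri_weight n k * real k / (real k + 1) + tri_weight m k * real k / (real k + 1)
                       = 2 / real n * (tri_weight n k * (real k * real (n - k)) / (real k + 1))"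
      using combine[of "real n" "real k" "tri_weight n k"] assms by simp
  qed
  also have "\<dots> = 2 / real n * (\<Sum>k=0..n div 2. tri_weight n k * (real k * real (n - k)) / (real k + 1))"
    unfolding sum_distrib_left[symmetric]
    by (intro arg_cong[where f = "(*) _"] sum.mono_neutral_right) (auto simp: tri_weight_eq_0)
  finally show ?thesis by (simp add: tri_weight_def)
qed

subsection \<open>Central trinomial coefficients and their generating function\<close>

definition T_real :: "nat \<Rightarrow> real" where
  "T_real n = real_of_int (ctri n 0)"

lemma T_real_0: "T_real 0 = 1" and T_real_1: "T_real (Suc 0) = 1"
  using ctri_Suc[of 0 0] by (simp_all add: T_real_def ctri_0)

lemma T_real_nonneg: "T_real n \<ge> 0"
  by (simp add: T_real_def ctri_nonneg)

lemma T_real_le: "T_real n \<le> 3 ^ n"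
  using ctri_le[of n 0] unfolding T_real_def by (metis of_int_le_iff of_int_numeral of_int_power)

lemma ctri_1_central: "2 * ctri (n + 1) 1 = ctri (n + 2) 0 - ctri (n + 1) 0"
  using ctri_Suc[of "n + 1" 0] ctri_sym[of "n + 1" 1] by simp

lemma ctri_2_central: "2 * ctri n 2 = ctri (n + 2) 0 - 2 * ctri (n + 1) 0 - ctri n 0"
  using ctri_Suc[of n 0] ctri_Suc[of n 1] ctri_Suc[of "n + 1" 0] ctri_sym[of n 1] ctri_sym[of "n + 1" 1]
  by simp

lemma T_real_recurrence:
  "real (n + 2) * T_real (n + 2) = real (2 * n + 3) * T_real (n + 1) + 3 * real (n + 1) * T_real n"
proof -
  have ballot: "ctri (n + 1) 1 = (int n + 1) * (ctri n 0 - ctri n 2)"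
    using ctri_ballot[of 1 n] by simp
  have "(int n + 2) * ctri (n + 2) 0 = (2 * int n + 3) * ctri (n + 1) 0 + 3 * (int n + 1) * ctri n 0"
    using ctri_1_central[of n] ctri_2_central[of n] ballot by algebra
  hence "real_of_int ((int n + 2) * ctri (n + 2) 0)
           = real_of_int ((2 * int n + 3) * ctri (n + 1) 0 + 3 * (int n + 1) * ctri n 0)"
    by (rule arg_cong)
  thus ?thesis by (simp add: T_real_def algebra_simps)
qed

definition T_fps :: "real fps" where
  "T_fps = Abs_fps T_real"

definition disc_fps :: "real fps" where
  "disc_fps = fps_of_poly [:1, -2, -3:]"

lemma disc_fps_eq: "disc_fps = 1 - fps_const 2 * fps_X - fps_const 3 * fps_X ^ 2"
  by (rule fps_ext) (auto simp: disc_fps_def coeff_pCons' fps_X_power_mult_nth numeral_2_eq_2)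

lemma disc_fps_deriv: "fps_deriv disc_fps = - (2 * (1 + fps_const 3 * fps_X))"
proof -
  have "fps_deriv disc_fps = fps_const (-2) + fps_const (-6) * fps_X"
    by (rule fps_ext) (auto simp: disc_fps_def coeff_pCons' numeral_2_eq_2)
  thus ?thesis by (simp add: fps_numeral_fps_const algebra_simps)
qed

lemma disc_fps_mult_nth:
  "fps_nth (disc_fps * G) n = fps_nth G n - 2 * (if n = 0 then 0 else fps_nth G (n - 1))
                              - 3 * (if n < 2 then 0 else fps_nth G (n - 2))"
proof -
  have "disc_fps * G = G - fps_const 2 * (fps_X * G) - fps_const 3 * (fps_X ^ 2 * G)"
    unfolding disc_fps_eq by (simp add: algebra_simps)
  thus ?thesis by (simp add: fps_X_power_mult_nth)
qed

lemma T_fps_ode: "disc_fps * fps_deriv T_fps = (1 + fps_const 3 * fps_X) * T_fps"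
proof (rule fps_ext)
  fix n
  have rhs: "fps_nth ((1 + fps_const 3 * fps_X) * T_fps) n = T_real n + 3 * (if n = 0 then 0 else T_real (n - 1))"
    by (simp add: algebra_simps T_fps_def)
  show "fps_nth (disc_fps * fps_deriv T_fps) n = fps_nth ((1 + fps_const 3 * fps_X) * T_fps) n"
  proof (cases n)
    case 0 thus ?thesis using T_real_0 T_real_1 rhs by (simp add: disc_fps_mult_nth T_fps_def disc_fps_def)
  next
    case (Suc m)
    have "fps_nth (disc_fps * fps_deriv T_fps) n
            = real (m + 2) * T_real (m + 2) - 2 * (real (m + 1) * T_real (m + 1)) - 3 * real m * T_real m"
      using Suc by (cases m) (simp_all add: disc_fps_mult_nth T_fps_def algebra_simps, simp add: disc_fps_def)
    also have "\<dots> = T_real (m + 1) + 3 * T_real m" using T_real_recurrence[of m] by (simp add: algebra_simps)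
    finally show ?thesis using rhs Suc by simp
  qed
qed

text \<open>Solving the differential equation: $\Delta T^2$ has derivative 0, hence $\Delta T^2 = 1$.\<close>
lemma T_fps_square: "disc_fps * T_fps * T_fps = 1"
proof -
  let ?Q = "disc_fps * T_fps * T_fps"
  have "fps_deriv ?Q = 2 * T_fps * (disc_fps * fps_deriv T_fps) + fps_deriv disc_fps * T_fps * T_fps"
    by (simp add: algebra_simps)
  also have "\<dots> = 0" unfolding T_fps_ode disc_fps_deriv by (simp add: algebra_simps)
  finally have "?Q = fps_const (fps_nth ?Q 0)" by (simp only: fps_deriv_eq_0_iff)
  also have "fps_nth ?Q 0 = 1" using T_real_0 by (simp add: disc_fps_def T_fps_def)
  finally show ?thesis by simp
qed

text \<open>Since $T_n \le 3^n$, the series converges for $|x| < 1/3$.\<close>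
lemma T_fps_radius: "\<bar>y::real\<bar> < 1/3 \<Longrightarrow> ereal (norm y) < fps_conv_radius T_fps"
proof -
  assume y: "\<bar>y\<bar> < 1/3"
  have "summable (\<lambda>n. T_real n * x ^ n)" if "\<bar>x\<bar> < 1/3" for x :: real
  proof (rule summable_comparison_test)
    show "\<exists>N. \<forall>n\<ge>N. norm (T_real n * x ^ n) \<le> (3 * \<bar>x\<bar>) ^ n"
      using T_real_le T_real_nonneg
      by (auto simp: abs_mult power_abs power_mult_distrib intro!: mult_right_mono)
    show "summable (\<lambda>n. (3 * \<bar>x\<bar>) ^ n)" using that by (intro summable_geometric) simp
  qed
  hence "conv_radius T_real \<ge> ereal (1/3)" by (intro conv_radius_geI_ex') auto
  moreover have "ereal (norm y) < ereal (1/3)" using y by simp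
  ultimately have "ereal (norm y) < conv_radius T_real" by (meson less_le_trans)
  thus ?thesis by (simp add: fps_conv_radius_def T_fps_def)
qed

lemma disc_pos: "\<bar>x::real\<bar> < 1/3 \<Longrightarrow> 1 - 2*x - 3*x^2 > 0"
proof -
  assume "\<bar>x\<bar> < 1/3"
  moreover have "1 - 2*x - 3*x^2 = (1 - 3*x) * (1 + x)" by (simp add: algebra_simps power2_eq_square)
  ultimately show ?thesis by simp
qed

lemma T_eval_square:
  assumes "\<bar>y\<bar> < 1/3"
  shows "(1 - 2*y - 3*y^2) * (eval_fps T_fps y * eval_fps T_fps y) = 1"
proof -
  have r1: "ereal (norm y) < fps_conv_radius T_fps" using T_fps_radius[OF assms] .
  have r0: "ereal (norm y) < fps_conv_radius disc_fps" by (simp add: disc_fps_def)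
  have "ereal (norm y) < min (fps_conv_radius disc_fps) (fps_conv_radius T_fps)" using r0 r1 by simp
  hence r2: "ereal (norm y) < fps_conv_radius (disc_fps * T_fps)"
    using fps_conv_radius_mult[of disc_fps T_fps] by (rule less_le_trans)
  have "1 = eval_fps (disc_fps * T_fps * T_fps) y" using T_fps_square by simp
  also have "\<dots> = eval_fps disc_fps y * eval_fps T_fps y * eval_fps T_fps y"
    using r0 r1 r2 by (simp add: eval_fps_mult)
  finally show ?thesis by (simp add: disc_fps_def algebra_simps power2_eq_square)
qed

text \<open>The sum is positive on $(-1/3, 1/3)$: it is continuous, equals 1 at 0 and never
  vanishes, by the previous lemma.\<close>
lemma T_eval_pos:
  assumes "\<bar>y\<bar> < 1/3"
  shows "eval_fps T_fps y > 0"
proof (rule ccontr)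
  assume "\<not> eval_fps T_fps y > 0"
  hence neg: "eval_fps T_fps y \<le> 0" by simp
  have at0: "eval_fps T_fps 0 = 1" using T_real_0 by (simp add: eval_fps_at_0 T_fps_def)
  have cont: "continuous_on {min y 0..max y 0} (eval_fps T_fps)"
  proof (rule continuous_on_subset[OF continuous_on_eval_fps], rule subsetI)
    fix z assume "z \<in> {min y 0..max y 0}"
    hence "\<bar>z\<bar> < 1/3" using assms by auto
    thus "z \<in> eball 0 (fps_conv_radius T_fps)" using T_fps_radius[of z] by (simp add: dist_norm)
  qed
  obtain z where "min y 0 \<le> z" "z \<le> max y 0" "eval_fps T_fps z = 0"
    using IVT'[of "eval_fps T_fps" y 0 0] IVT2'[of "eval_fps T_fps" y 0 0] neg at0 cont
    by (cases "y \<le> 0") (auto simp: min_def max_def)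
  moreover from this have "\<bar>z\<bar> < 1/3" using assms by linarith
  ultimately show False using T_eval_square[of z] by simp
qed

lemma T_real_sums:
  assumes "\<bar>x\<bar> < 1/3"
  shows "(\<lambda>n. T_real n * x ^ n) sums (1 / sqrt (1 - 2*x - 3*x^2))"
proof -
  define f where "f = eval_fps T_fps x"
  have "(\<lambda>n. T_real n * x ^ n) sums f"
    using sums_eval_fps[OF T_fps_radius[OF assms]] by (simp add: T_fps_def f_def)
  moreover have "f * f = 1 / (1 - 2*x - 3*x^2)"
    using T_eval_square[OF assms] disc_pos[OF assms]
    by (subst eq_divide_eq) (auto simp: f_def mult.commute)
  hence "sqrt (1 / (1 - 2*x - 3*x^2)) = f"
    using T_eval_pos[OF assms] by (intro real_sqrt_unique) (auto simp: f_def power2_eq_square)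
  ultimately show ?thesis by (simp add: real_sqrt_divide)
qed

lemma ellM_via_T:
  "real (ellM n) = (T_real (n + 2) - 2 * T_real (n + 1) - T_real n) / 2
     + (if n = 0 then 0 else (T_real (n + 1) - 2 * T_real n - T_real (n - 1)) / 2)"
proof -
  have d: "real_of_int (ctri k 2) = (T_real (k + 2) - 2 * T_real (k + 1) - T_real k) / 2" for k
    using arg_cong[OF ctri_2_central[of k], of real_of_int] by (simp add: T_real_def)
  show ?thesis
  proof (cases n)
    case 0 thus ?thesis using d[of 0] by (simp add: ellM_0 ctri_0)
  next
    case (Suc m)
    hence "real (ellM n) = real_of_int (ctri n 2) + real_of_int (ctri m 2)"
      using arg_cong[OF ellM_Suc_ctri[of m], of real_of_int] by simp
    thus ?thesis using d[of n] d[of m] Suc by simp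
  qed
qed

lemma ellM_generating_function:
  fixes x :: real
  assumes "0 < \<bar>x\<bar>" "\<bar>x\<bar> < 1/3"
  shows "(\<lambda>n. real (ellM n) * x ^ n) sums
           ((1 + x) * (1 - 2*x - x^2 - (1 - x) * sqrt (1 - 2*x - 3*x^2))
              / (2 * x^2 * sqrt (1 - 2*x - 3*x^2)))"
proof -
  define R where "R = sqrt (1 - 2*x - 3*x^2)"
  have "R > 0" using disc_pos[OF assms(2)] by (simp add: R_def)
  have "x \<noteq> 0" using assms by auto
  define t where "t = (\<lambda>n. T_real n * x ^ n)"
  have s0: "t sums (1 / R)" using T_real_sums[OF assms(2)] by (simp add: t_def R_def)
  have "t 0 = 1" "t (Suc 0) = x" by (simp_all add: t_def T_real_0 T_real_1)
  have s1: "(\<lambda>n. t (Suc n)) sums (1 / R - 1)"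
    using s0 by (subst sums_Suc_iff) (simp add: \<open>t 0 = 1\<close>)
  have s2: "(\<lambda>n. t (Suc (Suc n))) sums (1 / R - 1 - x)"
    using s1 by (subst sums_Suc_iff) (simp add: \<open>t (Suc 0) = x\<close>)
  define D where "D = ((1 / R - 1 - x) / x^2 - 2 * ((1 / R - 1) / x) - 1 / R) / 2"
  define d where "d n = (T_real (n + 2) - 2 * T_real (n + 1) - T_real n) / 2 * x ^ n" for n
  have "(\<lambda>n. (t (Suc (Suc n)) / x^2 - 2 * (t (Suc n) / x) - t n) / 2) sums D"
    unfolding D_def by (intro sums_divide sums_diff sums_mult s0 s1 s2)
  moreover have "(t (Suc (Suc n)) / x^2 - 2 * (t (Suc n) / x) - t n) / 2 = d n" for n
    using \<open>x \<noteq> 0\<close> by (simp add: t_def d_def field_simps power2_eq_square)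
  ultimately have sd: "d sums D" by simp
  define e where "e = (\<lambda>n. if n = 0 then 0 else x * d (n - 1))"
  have "(\<lambda>n. e (Suc n)) sums (x * D)" using sums_mult[OF sd, of x] by (simp add: e_def)
  hence "e sums (x * D)" by (subst (asm) sums_Suc_iff) (simp add: e_def)
  hence "(\<lambda>n. d n + e n) sums (D + x * D)" by (intro sums_add sd)
  moreover have "d n + e n = real (ellM n) * x ^ n" for n
    by (cases n) (simp_all add: ellM_via_T d_def e_def algebra_simps)
  moreover have "D + x * D = (1 + x) * (1 - 2*x - x^2 - (1 - x) * R) / (2 * x^2 * R)"
    using \<open>x \<noteq> 0\<close> \<open>R > 0\<close> by (simp add: D_def field_simps power2_eq_square)
  ultimately show ?thesis by (simp add: R_def)
qed

subsection \<open>Bounds on central binomial coefficients from Wallis' product\<close>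

text \<open>The normalised central binomial coefficient $c_k = \binom{2k}{k}/4^k$.  We show
  $2/(\pi(2k+1)) \le c_k^2 \le 1/(\pi k)$, by squeezing $\pi/2$ between partial Wallis products.\<close>
definition cbin :: "nat \<Rightarrow> real" where
  "cbin k = real ((2 * k) choose k) / 4 ^ k"

lemma cbin_pos: "cbin k > 0"
  by (simp add: cbin_def)

text \<open>From $(k+1)^2\binom{2k+2}{k+1} = (2k+2)(2k+1)\binom{2k}{k}$.\<close>
lemma cbin_Suc: "cbin (Suc k) * (2 * real k + 2) = cbin k * (2 * real k + 1)"
proof -
  have "Suc k * ((2 * Suc k) choose Suc k) = (2 * k + 2) * (Suc (2 * k) choose k)"
    using Suc_times_binomial[of k "Suc (2 * k)"] by simp
  moreover have "Suc k * (Suc (2 * k) choose k) = (2 * k + 1) * ((2 * k) choose k)"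
    using Suc_times_binomial[of k "2 * k"] binomial_symmetric[of "Suc k" "Suc (2 * k)"] by simp
  ultimately have "Suc k * (Suc k * ((2 * Suc k) choose Suc k)) = (2 * k + 2) * ((2 * k + 1) * ((2 * k) choose k))"
    by (metis mult.left_commute)
  hence "real (Suc k * (Suc k * ((2 * Suc k) choose Suc k)))
          = real ((2 * k + 2) * ((2 * k + 1) * ((2 * k) choose k)))" by (rule arg_cong)
  hence nat_id: "real ((2 * Suc k) choose Suc k) * (real k + 1)^2
                   = real ((2 * k) choose k) * ((2 * real k + 2) * (2 * real k + 1))"
    by (simp add: power2_eq_square algebra_simps del: binomial_Suc_Suc)
  have "cbin (Suc k) * (2 * real k + 2) * (real k + 1)
          = real ((2 * Suc k) choose Suc k) * (real k + 1)^2 * 2 / (4 * 4 ^ k)"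
    by (simp add: cbin_def power2_eq_square field_simps del: binomial_Suc_Suc)
  also have "\<dots> = cbin k * (2 * real k + 1) * (real k + 1)"
    unfolding nat_id by (simp add: cbin_def field_simps)
  finally show ?thesis by simp
qed

lemma cbin_le_1: "cbin k \<le> 1"
proof (induction k)
  case (Suc k)
  have "cbin (Suc k) * (2 * real k + 2) = cbin k * (2 * real k + 1)" by (rule cbin_Suc)
  also have "\<dots> \<le> 1 * (2 * real k + 2)" using Suc cbin_pos[of k] by (intro mult_mono) auto
  finally show ?case by simp
qed (simp add: cbin_def)

definition wallis_partial :: "nat \<Rightarrow> real" where
  "wallis_partial k = (\<Prod>j=1..k. 4 * real j ^ 2 / (4 * real j ^ 2 - 1))"

lemma wallis_partial_cbin: "wallis_partial k * ((2 * real k + 1) * cbin k ^ 2) = 1"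
proof (induction k)
  case (Suc k)
  have "4 * (1 + real k)\<^sup>2 = (2 * real k + 2)^2" "(2 * real k + 2)^2 - 1 = (2 * real k + 1) * (2 * real k + 3)"
    by (simp_all add: power2_eq_square algebra_simps)
  hence step: "wallis_partial (Suc k)
                 = wallis_partial k * ((2 * real k + 2)^2 / ((2 * real k + 1) * (2 * real k + 3)))"
    unfolding wallis_partial_def by simp
  have sq: "(2 * real k + 2)^2 * cbin (Suc k)^2 = (2 * real k + 1)^2 * cbin k ^ 2"
    using arg_cong[OF cbin_Suc[of k], of "\<lambda>t. t ^ 2"] by (simp add: power_mult_distrib mult.commute)
  have cancel: "b^2 / (a * c) * (c * B^2) = a * A^2"
    if "a \<noteq> 0" "c \<noteq> 0" "b^2 * B^2 = a^2 * A^2" for a b c A B :: real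
    using that by (simp add: field_simps power2_eq_square)
  have "2 * real (Suc k) + 1 = 2 * real k + 3" by simp
  hence "wallis_partial (Suc k) * ((2 * real (Suc k) + 1) * cbin (Suc k) ^ 2)
          = wallis_partial k * ((2 * real k + 2)^2 / ((2 * real k + 1) * (2 * real k + 3))
              * ((2 * real k + 3) * cbin (Suc k)^2))"
    by (simp only: step mult.assoc)
  also have "(2 * real k + 2)^2 / ((2 * real k + 1) * (2 * real k + 3)) * ((2 * real k + 3) * cbin (Suc k)^2)
               = (2 * real k + 1) * cbin k ^ 2"
    by (rule cancel[OF _ _ sq]) simp_all
  finally show ?case using Suc by simp
qed (simp add: cbin_def wallis_partial_def)

lemma cbin_Suc_sq: "(cbin (Suc k) * (2 * real k + 2))^2 = (cbin k * (2 * real k + 1))^2"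
  using cbin_Suc by simp

definition cbin_odd :: "nat \<Rightarrow> real" where
  "cbin_odd k = (2 * real k + 1) * cbin k ^ 2"

definition cbin_even :: "nat \<Rightarrow> real" where
  "cbin_even k = (2 * real k + 2) * cbin (Suc k) ^ 2"

lemma cbin_odd_lim: "cbin_odd \<longlonglongrightarrow> 2 / pi"
proof -
  have "(\<lambda>k. inverse (wallis_partial k)) \<longlonglongrightarrow> inverse (pi / 2)"
    using wallis unfolding wallis_partial_def by (intro tendsto_inverse) auto
  moreover have "inverse (wallis_partial k) = cbin_odd k" for k
    using wallis_partial_cbin[of k] unfolding cbin_odd_def by (rule inverse_unique)
  ultimately show ?thesis by simp
qed

lemma cbin_odd_decseq: "decseq cbin_odd"
proof (rule decseq_SucI)
  fix k
  have "(2 * real k + 2)^2 * cbin_odd (Suc k) = (2 * real k + 3) * (cbin (Suc k) * (2 * real k + 2))^2"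
    by (simp add: cbin_odd_def power2_eq_square algebra_simps)
  also have "\<dots> = ((2 * real k + 3) * (2 * real k + 1)) * ((2 * real k + 1) * cbin k ^ 2)"
    unfolding cbin_Suc_sq by (simp add: power2_eq_square algebra_simps)
  also have "\<dots> \<le> (2 * real k + 2)^2 * ((2 * real k + 1) * cbin k ^ 2)"
    by (intro mult_right_mono) (auto simp: power2_eq_square algebra_simps)
  finally show "cbin_odd (Suc k) \<le> cbin_odd k"
    unfolding cbin_odd_def[of k] by (simp add: mult_le_cancel_left_pos)
qed

lemma cbin_even_lim: "cbin_even \<longlonglongrightarrow> 2 / pi"
proof -
  have "(\<lambda>k. cbin_odd (Suc k) * ((2 * real k + 2) / (2 * real k + 3))) \<longlonglongrightarrow> 2 / pi * 1"
    using cbin_odd_lim[THEN LIMSEQ_Suc] by (intro tendsto_mult) (auto, real_asymp)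
  moreover have "cbin_odd (Suc k) * ((2 * real k + 2) / (2 * real k + 3)) = cbin_even k" for k
    by (simp add: cbin_odd_def cbin_even_def field_simps)
  ultimately show ?thesis by simp
qed

lemma cbin_even_incseq: "incseq cbin_even"
proof (rule incseq_SucI)
  fix k
  have p: "2 * real k + 4 > 0" by simp
  have "(2 * real k + 4) * cbin_even k = ((2 * real k + 4) * (2 * real k + 2)) * cbin (Suc k) ^ 2"
    by (simp add: cbin_even_def algebra_simps)
  also have "\<dots> \<le> (2 * real k + 3)^2 * cbin (Suc k) ^ 2"
    by (intro mult_right_mono) (auto simp: power2_eq_square algebra_simps)
  also have "\<dots> = (cbin (Suc (Suc k)) * (2 * real (Suc k) + 2))^2"
    unfolding cbin_Suc_sq by (simp add: power2_eq_square algebra_simps)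
  also have "\<dots> = (2 * real k + 4) * cbin_even (Suc k)"
    by (simp add: cbin_even_def power2_eq_square algebra_simps)
  finally show "cbin_even k \<le> cbin_even (Suc k)" using p by (simp only: mult_le_cancel_left_pos)
qed

lemma cbin_lower: "cbin k ^ 2 \<ge> 2 / (pi * (2 * real k + 1))"
proof -
  have "2 / pi \<le> cbin_odd k" using decseq_ge[OF cbin_odd_decseq cbin_odd_lim] .
  hence "(2 / pi) / (2 * real k + 1) \<le> cbin k ^ 2"
    unfolding cbin_odd_def by (subst pos_divide_le_eq) (auto simp: mult.commute)
  thus ?thesis by (simp add: field_simps)
qed

lemma cbin_upper: "k \<ge> 1 \<Longrightarrow> cbin k ^ 2 \<le> 1 / (pi * real k)"
proof -
  assume "k \<ge> 1"
  then obtain m where k: "k = Suc m" by (cases k) auto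
  have "cbin_even m \<le> 2 / pi" using incseq_le[OF cbin_even_incseq cbin_even_lim] .
  hence "cbin k ^ 2 \<le> (2 / pi) / (2 * real m + 2)" unfolding cbin_even_def k
    by (subst pos_le_divide_eq) (auto simp: mult.commute)
  moreover have "pi * (2 * real m + 2) = 2 * (pi * real k)" using k by (simp add: algebra_simps)
  hence "(2 / pi) / (2 * real m + 2) = 1 / (pi * real k)" by (simp add: divide_divide_eq_left)
  ultimately show ?thesis by simp
qed

subsection \<open>Asymptotics of the central trinomial coefficients\<close>

text \<open>Choosing which 2j of the n steps are non-horizontal, and then which j of those go up:
  $T_n = \sum_j \binom{n}{2j}\binom{2j}{j}$.\<close>
lemma T_real_binomial_sum: "T_real n = (\<Sum>j\<le>n. real (n choose (2 * j)) * real ((2 * j) choose j))"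
proof -
  have "T_real n = real (trinom n n)" by (simp add: T_real_def ctri_def)
  also have "\<dots> = (\<Sum>j\<le>n. real ((n choose j) * (if 2 * j \<le> n then (n - j) choose (n - 2 * j) else 0)))"
    by (simp add: trinom_sum)
  also have "\<dots> = (\<Sum>j\<le>n. real (n choose (2 * j)) * real ((2 * j) choose j))"
  proof (rule sum.cong[OF refl])
    fix j assume "j \<in> {..n}"
    show "real ((n choose j) * (if 2 * j \<le> n then (n - j) choose (n - 2 * j) else 0))
            = real (n choose (2 * j)) * real ((2 * j) choose j)"
    proof (cases "2 * j \<le> n")
      case True
      have "(n choose (2 * j)) * ((2 * j) choose j) = (n choose j) * ((n - j) choose (2 * j - j))"
        using True by (intro choose_mult) auto
      also have "(n - j) choose (2 * j - j) = (n - j) choose (n - 2 * j)"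
        using binomial_symmetric[of j "n - j"] True by (simp add: diff_diff_left mult_2)
      finally have prod: "(n choose (2 * j)) * ((2 * j) choose j) = (n choose j) * ((n - j) choose (n - 2 * j))" .
      have "real (n choose (2 * j)) * real ((2 * j) choose j) = real ((n choose (2 * j)) * ((2 * j) choose j))"
        by simp
      also have "\<dots> = real ((n choose j) * (if 2 * j \<le> n then (n - j) choose (n - 2 * j) else 0))"
        using prod True by simp
      finally show ?thesis by simp
    qed simp
  qed
  finally show ?thesis .
qed

text \<open>Hence $T_n/3^n = \sum_j w_n(j)\,c_j$, where $w_n(j) = \binom{n}{2j}2^{2j}/3^n$ is the
  probability that a Binomial(n, 2/3) variable takes the even value 2j.\<close>
definition even_weight :: "nat \<Rightarrow> nat \<Rightarrow> real" where
  "even_weight n j = real (n choose (2 * j)) * 4 ^ j / 3 ^ n"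

lemma even_weight_nonneg: "even_weight n j \<ge> 0"
  by (simp add: even_weight_def)

lemma T_real_weighted: "T_real n / 3 ^ n = (\<Sum>j\<le>n. even_weight n j * cbin j)"
  unfolding T_real_binomial_sum sum_divide_distrib
  by (intro sum.cong refl) (simp add: even_weight_def cbin_def)

lemma even_weight_sum: "(\<Sum>j\<le>n. even_weight n j) = (1 + (-1/3) ^ n) / 2"
proof -
  have "(\<Sum>j\<le>n. real (n choose (2 * j)) * 4 ^ j) = (\<Sum>j<n + 1. real (n choose (2 * j)) * 2 ^ (2 * j))"
    by (intro sum.cong) (auto simp: power_mult)
  also have "\<dots> = (\<Sum>i<2 * (n + 1). if even i then real (n choose i) * 2 ^ i else 0)"
    using sum_split_even_odd[of "\<lambda>i. real (n choose i) * 2 ^ i" "\<lambda>_. 0" "n + 1"] by simp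
  also have "\<dots> = (\<Sum>i\<le>n. if even i then real (n choose i) * 2 ^ i else 0)"
    by (rule sum.mono_neutral_right) auto
  also have "\<dots> = (\<Sum>i\<le>n. (real (n choose i) * 2 ^ i * 1 ^ (n - i)
                              + real (n choose i) * (-2) ^ i * 1 ^ (n - i)) / 2)"
    by (intro sum.cong refl) (auto simp: power_minus')
  also have "\<dots> = ((2 + 1) ^ n + ((-2) + 1) ^ n) / 2"
    unfolding binomial_ring sum_divide_distrib[symmetric] sum.distrib by simp
  finally have "(\<Sum>j\<le>n. real (n choose (2 * j)) * 4 ^ j) = (3 ^ n + (-1) ^ n) / 2" by simp
  moreover have "(3::real) ^ n * (-1/3) ^ n = (-1) ^ n" by (simp flip: power_mult_distrib)
  ultimately show ?thesis unfolding even_weight_def sum_divide_distrib[symmetric] by (simp add: field_simps)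
qed

lemma even_weight_sum_lim: "(\<lambda>n. \<Sum>j\<le>n. even_weight n j) \<longlonglongrightarrow> 1/2"
proof -
  have "(\<lambda>n. (1 + (-1/3::real) ^ n) / 2) \<longlonglongrightarrow> (1 + 0) / 2"
    by (intro tendsto_intros LIMSEQ_power_zero) auto
  thus ?thesis by (simp add: even_weight_sum)
qed

text \<open>Hoeffding's inequality for the Binomial(n, 2/3) distribution bounds the weight of the
  indices j for which 2j/n is far from its mean 2/3.\<close>
definition bulk :: "nat \<Rightarrow> real \<Rightarrow> nat set" where
  "bulk n \<delta> = {j. j \<le> n \<and> \<bar>2 * real j / real n - 2/3\<bar> < \<delta>}"

definition tail :: "nat \<Rightarrow> real \<Rightarrow> nat set" where
  "tail n \<delta> = {j. j \<le> n \<and> \<delta> \<le> \<bar>2 * real j / real n - 2/3\<bar>}"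

lemma sum_bulk_tail: "(\<Sum>j\<le>n. f j) = (\<Sum>j\<in>bulk n \<delta>. f j) + (\<Sum>j\<in>tail n \<delta>. f j)"
proof -
  have "{..n} = bulk n \<delta> \<union> tail n \<delta>" "bulk n \<delta> \<inter> tail n \<delta> = {}"
       "finite (bulk n \<delta>)" "finite (tail n \<delta>)"
    by (auto simp: bulk_def tail_def)
  thus ?thesis by (simp add: sum.union_disjoint)
qed

lemma even_weight_tail:
  assumes "n > 0" "\<delta> \<ge> 0"
  shows "(\<Sum>j\<in>tail n \<delta>. even_weight n j) \<le> 2 * exp (- 2 * real n * \<delta>^2)"
proof -
  define p where "p = binomial_pmf n (2/3::real)"
  define A where "A = {x::nat. \<delta> \<le> \<bar>real x / real n - 2/3\<bar>}"
  interpret binomial_distribution n "2/3" by unfold_locales simp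
  have hoeffding: "measure_pmf.prob p A \<le> 2 * exp (- 2 * real n * \<delta>^2)"
    using prob_abs_ge'[OF assms] by (simp add: p_def A_def)
  have "measure_pmf.prob p A = measure_pmf.prob p (A \<inter> set_pmf p)" by (simp add: measure_Int_set_pmf)
  also have "\<dots> = (\<Sum>i\<in>A \<inter> {..n}. pmf p i)" by (simp add: p_def measure_measure_pmf_finite)
  finally have prob_sum: "measure_pmf.prob p A = (\<Sum>i\<in>A \<inter> {..n}. pmf p i)" .
  have pmf_even: "pmf p (2 * j) = even_weight n j" if "2 * j \<le> n" for j
  proof -
    have "(3::real) ^ n = 3 ^ (2 * j) * 3 ^ (n - 2 * j)" using that by (simp flip: power_add)
    moreover have "((2::real) ^ j)^2 = 4 ^ j" by (simp add: power2_eq_square power_mult_distrib[symmetric])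
    ultimately show ?thesis using that by (simp add: p_def even_weight_def power_divide power_mult field_simps)
  qed
  have "(\<Sum>j\<in>tail n \<delta>. even_weight n j) = (\<Sum>j\<in>tail n \<delta> \<inter> {j. 2 * j \<le> n}. even_weight n j)"
    by (rule sum.mono_neutral_right) (auto simp: tail_def even_weight_def)
  also have "\<dots> = (\<Sum>i\<in>(\<lambda>j. 2 * j) ` (tail n \<delta> \<inter> {j. 2 * j \<le> n}). pmf p i)"
    by (subst sum.reindex) (auto intro: inj_onI simp: pmf_even)
  also have "\<dots> \<le> (\<Sum>i\<in>A \<inter> {..n}. pmf p i)"
    by (intro sum_mono2) (auto simp: A_def tail_def)
  finally show ?thesis using hoeffding prob_sum by simp
qed

lemma bulk_range:
  assumes "n \<ge> 1" "\<delta> \<le> 1/10" "j \<in> bulk n \<delta>"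
  shows "real n * (1/3 - \<delta>/2) \<le> real j" "j \<ge> 1" "2 * real j \<le> real n * (2/3 + \<delta>)"
proof -
  have "real n > 0" using assms by simp
  have "\<bar>2 * real j / real n - 2/3\<bar> < \<delta>" using assms by (simp add: bulk_def)
  hence lo: "2 * real j > real n * (2/3 - \<delta>)" and hi: "2 * real j < real n * (2/3 + \<delta>)"
    using \<open>real n > 0\<close> by (auto simp: field_simps)
  show "real n * (1/3 - \<delta>/2) \<le> real j" using lo by (simp add: algebra_simps)
  show "2 * real j \<le> real n * (2/3 + \<delta>)" using hi by simp
  have "real n * (2/3 - \<delta>) > 0" using \<open>real n > 0\<close> assms by simp
  thus "j \<ge> 1" using lo by simp
qed

lemma cbin_bulk_upper:
  assumes "n \<ge> 1" "\<delta> \<le> 1/10" "j \<in> bulk n \<delta>"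
  shows "sqrt (real n) * cbin j \<le> sqrt (1 / (pi * (1/3 - \<delta>/2)))"
proof -
  note range = bulk_range[OF assms]
  have "cbin j \<le> sqrt (1 / (pi * real j))"
    using cbin_upper[OF range(2)] by (intro real_le_rsqrt) auto
  hence "sqrt (real n) * cbin j \<le> sqrt (real n) * sqrt (1 / (pi * real j))"
    by (intro mult_left_mono) auto
  also have "\<dots> = sqrt (real n / (pi * real j))" by (simp add: real_sqrt_mult[symmetric])
  also have "real n / (pi * real j) \<le> 1 / (pi * (1/3 - \<delta>/2))"
  proof -
    have "real n / (pi * real j) = (real n * (1/3 - \<delta>/2)) / (pi * real j * (1/3 - \<delta>/2))"
      using assms range by simp
    also have "\<dots> \<le> real j / (pi * real j * (1/3 - \<delta>/2))"
      using assms range by (intro divide_right_mono) auto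
    also have "\<dots> = 1 / (pi * (1/3 - \<delta>/2))" using range by simp
    finally show ?thesis .
  qed
  hence "sqrt (real n / (pi * real j)) \<le> sqrt (1 / (pi * (1/3 - \<delta>/2)))" by (rule real_sqrt_le_mono)
  finally show ?thesis .
qed

lemma cbin_bulk_lower:
  assumes "n \<ge> 1" "0 \<le> \<delta>" "\<delta> \<le> 1/10" "j \<in> bulk n \<delta>"
  shows "sqrt (2 / (pi * (2/3 + \<delta> + 1 / real n))) \<le> sqrt (real n) * cbin j"
proof -
  note range = bulk_range[OF assms(1,3,4)]
  have "real n > 0" using assms by simp
  have pos: "2/3 + \<delta> + 1 / real n > 0" using assms \<open>real n > 0\<close> by (simp add: add_pos_nonneg)
  have le: "2 * real j + 1 \<le> real n * (2/3 + \<delta> + 1 / real n)"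
    using range(3) \<open>real n > 0\<close> by (simp add: algebra_simps)
  have "2 / (pi * (2/3 + \<delta> + 1 / real n)) = 2 * real n / (pi * (real n * (2/3 + \<delta> + 1 / real n)))"
    using \<open>real n > 0\<close> by simp
  also have "\<dots> \<le> 2 * real n / (pi * (2 * real j + 1))"
    using le pos \<open>real n > 0\<close> by (intro divide_left_mono mult_left_mono mult_pos_pos) auto
  also have "\<dots> = real n * (2 / (pi * (2 * real j + 1)))" by simp
  finally have "sqrt (2 / (pi * (2/3 + \<delta> + 1 / real n))) \<le> sqrt (real n) * sqrt (2 / (pi * (2 * real j + 1)))"
    by (simp add: real_sqrt_le_mono real_sqrt_mult[symmetric])
  also have "sqrt (2 / (pi * (2 * real j + 1))) \<le> cbin j"
    using cbin_lower[of j] cbin_pos[of j] by (intro real_le_lsqrt) auto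
  finally show ?thesis by (simp add: mult_left_mono)
qed

lemma T_scaled_weighted:
  "sqrt (real n) * (T_real n / 3 ^ n) = (\<Sum>j\<le>n. even_weight n j * (sqrt (real n) * cbin j))"
  unfolding T_real_weighted sum_distrib_left by (simp add: algebra_simps)

text \<open>Upper and lower bounds for $\sqrt{n}\,T_n/3^n$: on the bulk we use the bounds above,
  on the tail $c_j \le 1$ and the total weight is exponentially small.\<close>
lemma T_scaled_upper:
  assumes "n \<ge> 1" "0 \<le> \<delta>" "\<delta> \<le> 1/10"
  shows "sqrt (real n) * (T_real n / 3 ^ n) \<le> sqrt (1 / (pi * (1/3 - \<delta>/2))) * (\<Sum>j\<le>n. even_weight n j)
           + sqrt (real n) * (2 * exp (- 2 * real n * \<delta>^2))"
proof -
  define u where "u = sqrt (1 / (pi * (1/3 - \<delta>/2)))"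
  have "sqrt (real n) * (T_real n / 3 ^ n)
          = (\<Sum>j\<in>bulk n \<delta>. even_weight n j * (sqrt (real n) * cbin j))
            + (\<Sum>j\<in>tail n \<delta>. even_weight n j * (sqrt (real n) * cbin j))"
    unfolding T_scaled_weighted by (rule sum_bulk_tail)
  also have "(\<Sum>j\<in>bulk n \<delta>. even_weight n j * (sqrt (real n) * cbin j)) \<le> (\<Sum>j\<in>bulk n \<delta>. even_weight n j * u)"
    unfolding u_def using assms by (intro sum_mono mult_left_mono cbin_bulk_upper even_weight_nonneg)
  also have "\<dots> \<le> (\<Sum>j\<le>n. even_weight n j) * u"
    unfolding sum_distrib_right[symmetric] using assms
    by (intro mult_right_mono sum_mono2) (auto simp: bulk_def even_weight_nonneg u_def)
  also have "(\<Sum>j\<in>tail n \<delta>. even_weight n j * (sqrt (real n) * cbin j)) \<le> (\<Sum>j\<in>tail n \<delta>. even_weight n j) * sqrt (real n)"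
    unfolding sum_distrib_right
    using cbin_le_1 cbin_pos by (intro sum_mono mult_left_mono even_weight_nonneg) (auto intro: mult_left_le)
  also have "\<dots> \<le> (2 * exp (- 2 * real n * \<delta>^2)) * sqrt (real n)"
    using even_weight_tail[of n \<delta>] assms by (intro mult_right_mono) auto
  finally show ?thesis unfolding u_def by (simp add: mult.commute)
qed

lemma T_scaled_lower:
  assumes "n \<ge> 1" "0 \<le> \<delta>" "\<delta> \<le> 1/10"
  shows "sqrt (2 / (pi * (2/3 + \<delta> + 1 / real n))) * ((\<Sum>j\<le>n. even_weight n j) - 2 * exp (- 2 * real n * \<delta>^2))
           \<le> sqrt (real n) * (T_real n / 3 ^ n)"
proof -
  define l where "l = sqrt (2 / (pi * (2/3 + \<delta> + 1 / real n)))"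
  have "l \<ge> 0" unfolding l_def using assms by (simp add: add_pos_nonneg)
  have "(\<Sum>j\<le>n. even_weight n j) - 2 * exp (- 2 * real n * \<delta>^2) \<le> (\<Sum>j\<in>bulk n \<delta>. even_weight n j)"
    using sum_bulk_tail[of "even_weight n" n \<delta>] even_weight_tail[of n \<delta>] assms by simp
  hence "l * ((\<Sum>j\<le>n. even_weight n j) - 2 * exp (- 2 * real n * \<delta>^2)) \<le> l * (\<Sum>j\<in>bulk n \<delta>. even_weight n j)"
    using \<open>l \<ge> 0\<close> by (rule mult_left_mono)
  also have "\<dots> = (\<Sum>j\<in>bulk n \<delta>. even_weight n j * l)" by (simp add: sum_distrib_left mult.commute)
  also have "\<dots> \<le> (\<Sum>j\<in>bulk n \<delta>. even_weight n j * (sqrt (real n) * cbin j))"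
    unfolding l_def using assms by (intro sum_mono mult_left_mono cbin_bulk_lower even_weight_nonneg)
  also have "\<dots> \<le> (\<Sum>j\<le>n. even_weight n j * (sqrt (real n) * cbin j))"
    unfolding sum_bulk_tail[of _ n \<delta>]
    by (intro add_increasing2 sum_nonneg mult_nonneg_nonneg even_weight_nonneg) (auto intro: less_imp_le[OF cbin_pos])
  finally show ?thesis unfolding l_def T_scaled_weighted .
qed

text \<open>Letting $\delta = n^{-1/4}$ in the two bounds: $T_n \sim \frac{\sqrt3}{2\sqrt{\pi n}}\,3^n$.\<close>
lemma T_real_asymptotic: "(\<lambda>n. sqrt (real n) * (T_real n / 3 ^ n)) \<longlonglongrightarrow> sqrt (3 / pi) / 2"
proof -
  define \<delta> where "\<delta> = (\<lambda>n::nat. real n powr (-1/4))"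
  define \<sigma> where "\<sigma> = (\<lambda>n. \<Sum>j\<le>n. even_weight n j)"
  define E where "E = (\<lambda>n. 2 * exp (- 2 * real n * \<delta> n ^ 2))"
  define L where "L = (\<lambda>n. sqrt (2 / (pi * (2/3 + \<delta> n + 1 / real n))) * (\<sigma> n - E n))"
  define U where "U = (\<lambda>n. sqrt (1 / (pi * (1/3 - \<delta> n / 2))) * \<sigma> n + sqrt (real n) * E n)"
  have \<delta>0: "\<delta> \<longlonglongrightarrow> 0" unfolding \<delta>_def by real_asymp
  have E0: "E \<longlonglongrightarrow> 0" "(\<lambda>n. sqrt (real n) * E n) \<longlonglongrightarrow> 0" unfolding E_def \<delta>_def by real_asymp+
  have \<sigma>: "\<sigma> \<longlonglongrightarrow> 1/2" unfolding \<sigma>_def by (rule even_weight_sum_lim)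
  have inv: "(\<lambda>n. 1 / real n) \<longlonglongrightarrow> 0" by real_asymp
  have "L \<longlonglongrightarrow> sqrt (2 / (pi * (2/3 + 0 + 0))) * (1/2 - 0)"
    unfolding L_def by (intro tendsto_intros \<delta>0 inv \<sigma> E0) auto
  hence L: "L \<longlonglongrightarrow> sqrt (3 / pi) / 2" by (simp add: field_simps)
  have "U \<longlonglongrightarrow> sqrt (1 / (pi * (1/3 - 0 / 2))) * (1/2) + 0"
    unfolding U_def by (intro tendsto_intros \<delta>0 \<sigma> E0) auto
  hence U: "U \<longlonglongrightarrow> sqrt (3 / pi) / 2" by (simp add: field_simps)
  have "eventually (\<lambda>n. \<delta> n < 1/10) sequentially" using \<delta>0 by (rule order_tendstoD) simp
  hence ev: "eventually (\<lambda>n. n \<ge> 1 \<and> \<delta> n \<le> 1/10) sequentially"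
    using eventually_ge_at_top[of "1::nat"] by eventually_elim auto
  have \<delta>_nonneg: "\<delta> n \<ge> 0" for n unfolding \<delta>_def by simp
  show ?thesis
  proof (rule tendsto_sandwich[OF _ _ L U])
    show "eventually (\<lambda>n. L n \<le> sqrt (real n) * (T_real n / 3 ^ n)) sequentially"
      using ev by eventually_elim (use T_scaled_lower \<delta>_nonneg in \<open>auto simp: L_def \<sigma>_def E_def\<close>)
    show "eventually (\<lambda>n. sqrt (real n) * (T_real n / 3 ^ n) \<le> U n) sequentially"
      using ev by eventually_elim (use T_scaled_upper \<delta>_nonneg in \<open>auto simp: U_def \<sigma>_def E_def\<close>)
  qed
qed

lemma T_real_shift_asymptotic:
  "(\<lambda>n. sqrt (real n) * (T_real (n + k) / 3 ^ n)) \<longlonglongrightarrow> 3 ^ k * (sqrt (3 / pi) / 2)"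
proof -
  have "(\<lambda>n. 3 ^ k * (sqrt (real (n + k)) * (T_real (n + k) / 3 ^ (n + k))) * sqrt (real n / real (n + k)))
          \<longlonglongrightarrow> 3 ^ k * (sqrt (3 / pi) / 2) * 1"
    using T_real_asymptotic[THEN LIMSEQ_ignore_initial_segment, of k]
    by (intro tendsto_intros) (simp_all, real_asymp)
  moreover have "3 ^ k * (sqrt (real (n + k)) * (T_real (n + k) / 3 ^ (n + k))) * sqrt (real n / real (n + k))
                   = sqrt (real n) * (T_real (n + k) / 3 ^ n)" for n
  proof (cases "n + k = 0")
    case False
    hence "sqrt (real (n + k)) * sqrt (real n / real (n + k)) = sqrt (real n)"
      by (simp add: real_sqrt_mult[symmetric])
    thus ?thesis by (simp add: power_add field_simps)
  qed simp
  ultimately show ?thesis by simp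
qed

lemma ellM_Suc_via_T:
  "real (ellM (Suc m)) = (T_real (m + 3) - T_real (m + 2) - 3 * T_real (m + 1) - T_real m) / 2"
  by (simp add: ellM_via_T eval_nat_numeral field_simps)

lemma ellM_scaled_lim:
  "(\<lambda>m. sqrt (real m) * (real (ellM (Suc m)) / 3 ^ m)) \<longlonglongrightarrow> 4 * (sqrt (3 / pi) / 2)"
proof -
  let ?t = "\<lambda>k m. sqrt (real m) * (T_real (m + k) / 3 ^ m)"
  have "(\<lambda>m. (?t 3 m - ?t 2 m - 3 * ?t 1 m - ?t 0 m) / 2)
          \<longlonglongrightarrow> (3^3 * (sqrt (3 / pi) / 2) - 3^2 * (sqrt (3 / pi) / 2)
               - 3 * (3^1 * (sqrt (3 / pi) / 2)) - 3^0 * (sqrt (3 / pi) / 2)) / 2"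
    by (intro T_real_shift_asymptotic tendsto_divide tendsto_diff tendsto_mult tendsto_const) simp
  moreover have "(?t 3 m - ?t 2 m - 3 * ?t 1 m - ?t 0 m) / 2 = sqrt (real m) * (real (ellM (Suc m)) / 3 ^ m)" for m
    by (simp add: ellM_Suc_via_T field_simps)
  ultimately show ?thesis by simp
qed

lemma ellM_asymptotic: "(\<lambda>n. real (ellM n)) \<sim>[at_top] (\<lambda>n. 2 * 3 ^ n / sqrt (3 * real n * pi))"
proof (rule asymp_equivI')
  let ?s = "\<lambda>m. sqrt (real m) * (real (ellM (Suc m)) / 3 ^ m)"
  have "(\<lambda>m. ?s m * sqrt ((real m + 1) / real m) * (sqrt (3 * pi) / 6))
          \<longlonglongrightarrow> 4 * (sqrt (3 / pi) / 2) * 1 * (sqrt (3 * pi) / 6)"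
    by (intro tendsto_intros ellM_scaled_lim) real_asymp
  moreover have "4 * (sqrt (3 / pi) / 2) * 1 * (sqrt (3 * pi) / 6) = 1"
  proof -
    have "sqrt (3 / pi) * sqrt (3 * pi) = 3" by (simp flip: real_sqrt_mult)
    thus ?thesis by (simp add: field_simps)
  qed
  moreover have "eventually (\<lambda>m. ?s m * sqrt ((real m + 1) / real m) * (sqrt (3 * pi) / 6)
                   = real (ellM (Suc m)) / (2 * 3 ^ Suc m / sqrt (3 * real (Suc m) * pi))) sequentially"
    using eventually_ge_at_top[of "1::nat"]
  proof eventually_elim
    case (elim m)
    have "sqrt (real m) * sqrt ((real m + 1) / real m) * sqrt (3 * pi) = sqrt (3 * real (Suc m) * pi)"
      using elim by (simp flip: real_sqrt_mult add: field_simps)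
    thus ?case by (simp add: field_simps)
  qed
  ultimately have "(\<lambda>m. real (ellM (Suc m)) / (2 * 3 ^ Suc m / sqrt (3 * real (Suc m) * pi))) \<longlonglongrightarrow> 1"
    by (simp add: Lim_transform_eventually)
  thus "((\<lambda>n. real (ellM n) / (2 * 3 ^ n / sqrt (3 * real n * pi))) \<longlongrightarrow> 1) at_top"
    by (rule filterlim_sequentially_Suc[THEN iffD1])
qed

lemma motzkin_via_T: "2 * (real n + 1) * real (motzkin n) = T_real (n + 2) - T_real (n + 1)"
proof -
  have "2 * (int n + 1) * int (motzkin n) = 2 * ctri (n + 1) 1"
    using ctri_ballot[of 1 n] motzkin_ctri[of n] by simp
  also have "\<dots> = ctri (n + 2) 0 - ctri (n + 1) 0" by (rule ctri_1_central)
  finally have "real_of_int (2 * (int n + 1) * int (motzkin n)) = real_of_int (ctri (n + 2) 0 - ctri (n + 1) 0)"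
    by (rule arg_cong)
  thus ?thesis by (simp add: T_real_def)
qed

lemma motzkin_scaled_lim:
  "(\<lambda>m. sqrt (real m) * (2 * (real m + 2) * real (motzkin (Suc m)) / 3 ^ m)) \<longlonglongrightarrow> 18 * (sqrt (3 / pi) / 2)"
proof -
  have "(\<lambda>m. sqrt (real m) * (T_real (m + 3) / 3 ^ m) - sqrt (real m) * (T_real (m + 2) / 3 ^ m))
          \<longlonglongrightarrow> 3^3 * (sqrt (3 / pi) / 2) - 3^2 * (sqrt (3 / pi) / 2)"
    by (intro tendsto_diff T_real_shift_asymptotic)
  moreover have "sqrt (real m) * (T_real (m + 3) / 3 ^ m) - sqrt (real m) * (T_real (m + 2) / 3 ^ m)
                   = sqrt (real m) * (2 * (real m + 2) * real (motzkin (Suc m)) / 3 ^ m)" for m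
  proof -
    have "T_real (m + 3) - T_real (m + 2) = 2 * (real m + 2) * real (motzkin (Suc m))"
      using motzkin_via_T[of "Suc m"] by (simp add: eval_nat_numeral algebra_simps)
    thus ?thesis by (simp only: diff_divide_distrib[symmetric] right_diff_distrib[symmetric])
  qed
  ultimately show ?thesis by (simp add: algebra_simps)
qed

lemma ellM_per_motzkin_asymptotic:
  "(\<lambda>n. real (ellM n) / real (card (motzkin_paths n))) \<sim>[at_top] (\<lambda>n. 4/9 * real n)"
proof (rule asymp_equivI')
  define K where "K = sqrt (3 / pi) / 2"
  have "K > 0" by (simp add: K_def)
  let ?s = "\<lambda>m. sqrt (real m) * (real (ellM (Suc m)) / 3 ^ m)"
  let ?r = "\<lambda>m. sqrt (real m) * (2 * (real m + 2) * real (motzkin (Suc m)) / 3 ^ m)"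
  have "(\<lambda>m. ?s m / ?r m * (9 / 2 * ((real m + 2) / (real m + 1)))) \<longlonglongrightarrow> 4 * K / (18 * K) * (9 / 2 * 1)"
    using \<open>K > 0\<close>
    by (intro tendsto_mult tendsto_divide tendsto_const ellM_scaled_lim[folded K_def]
          motzkin_scaled_lim[folded K_def]) (simp_all, real_asymp)
  moreover have "4 * K / (18 * K) * (9 / 2 * 1) = 1" using \<open>K > 0\<close> by simp
  moreover have "eventually (\<lambda>m. ?r m > 0) sequentially"
    using order_tendstoD(1)[OF motzkin_scaled_lim, of 0] by simp
  hence "eventually (\<lambda>m. ?s m / ?r m * (9 / 2 * ((real m + 2) / (real m + 1)))
           = real (ellM (Suc m)) / real (card (motzkin_paths (Suc m))) / (4/9 * real (Suc m))) sequentially"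
  proof eventually_elim
    case (elim m)
    define c where "c = sqrt (real m) / 3 ^ m"
    have "c \<noteq> 0" "real (motzkin (Suc m)) \<noteq> 0"
      using elim by (auto simp: c_def simp del: of_nat_eq_0_iff real_sqrt_eq_zero_cancel_iff)
    have cancel: "c * E / (c * (2 * q * M)) * (9 / 2 * (q / p)) = E / M / (4/9 * p)"
      if "c \<noteq> 0" "M \<noteq> 0" "q \<noteq> 0" "p \<noteq> 0" for c E q M p :: real
      using that by (simp add: field_simps)
    have "?s m = c * real (ellM (Suc m))" "?r m = c * (2 * (real m + 2) * real (motzkin (Suc m)))"
      by (simp_all add: c_def)
    hence "?s m / ?r m * (9 / 2 * ((real m + 2) / (real m + 1)))
             = c * real (ellM (Suc m)) / (c * (2 * (real m + 2) * real (motzkin (Suc m))))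
               * (9 / 2 * ((real m + 2) / (real m + 1)))" by (simp only:)
    also have "\<dots> = real (ellM (Suc m)) / real (motzkin (Suc m)) / (4/9 * (real m + 1))"
      using \<open>c \<noteq> 0\<close> \<open>real (motzkin (Suc m)) \<noteq> 0\<close> by (intro cancel) auto
    finally show ?case by (simp add: motzkin_def)
  qed
  ultimately have "(\<lambda>m. real (ellM (Suc m)) / real (card (motzkin_paths (Suc m))) / (4/9 * real (Suc m))) \<longlonglongrightarrow> 1"
    by (simp add: Lim_transform_eventually)
  thus "((\<lambda>n. real (ellM n) / real (card (motzkin_paths n)) / (4/9 * real n)) \<longlongrightarrow> 1) at_top"
    by (rule filterlim_sequentially_Suc[THEN iffD1])
qed

theorem mainTheorem8:
  shows "(\<forall>x::real. 0 < \<bar>x\<bar> \<and> \<bar>x\<bar> < 1/3 \<longrightarrow>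
            summable (\<lambda>n. real (ellM n) * x ^ n) \<and>
            (\<Sum>n. real (ellM n) * x ^ n) =
              (1 + x) * (1 - 2*x - x^2 - (1 - x) * sqrt (1 - 2*x - 3*x^2))
              / (2 * x^2 * sqrt (1 - 2*x - 3*x^2)))
     \<and> (\<forall>n\<ge>1. int (ellM n) = int (central_trinomial n) - int (motzkin n)
                 + int (central_trinomial (n - 1)) - int (motzkin (n - 1)))
     \<and> (\<forall>n\<ge>3. ellM n = trinom n (n - 2) + trinom (n - 1) (n - 3))
     \<and> (\<forall>n\<ge>1. real (ellM n) = 2 / real n *
            (\<Sum>k=0..n div 2. real (n choose k) * real ((n - k) choose k)
                 * (real k * real (n - k)) / (real k + 1)))
     \<and> (\<lambda>n. real (ellM n)) \<sim>[at_top] (\<lambda>n. 2 * 3 ^ n / sqrt (3 * real n * pi))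
     \<and> (\<lambda>n. real (ellM n) / real (card (motzkin_paths n))) \<sim>[at_top] (\<lambda>n. 4/9 * real n)"
proof -
  have "\<forall>x::real. 0 < \<bar>x\<bar> \<and> \<bar>x\<bar> < 1/3 \<longrightarrow>
            summable (\<lambda>n. real (ellM n) * x ^ n) \<and>
            (\<Sum>n. real (ellM n) * x ^ n) =
              (1 + x) * (1 - 2*x - x^2 - (1 - x) * sqrt (1 - 2*x - 3*x^2))
              / (2 * x^2 * sqrt (1 - 2*x - 3*x^2))"
    using ellM_generating_function by (simp add: sums_iff)
  thus ?thesis
    using ellM_central_motzkin ellM_trinom_below_centre ellM_binomial_sum
          ellM_asymptotic ellM_per_motzkin_asymptotic by blast
qed

end
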